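(* Let $\mathcal{H}_A$ and $\mathcal{H}_B$ be finite-dimensional Hilbert spaces, let $H$ be a Hamiltonian (Hermitian operator) on $\mathcal{H}_A\otimes\mathcal{H}_B$, and let $|\psi_0\rangle\in\mathcal{H}_A\otimes\mathcal{H}_B$ be a normalized pure initial state. Let $\{|k_n\rangle\}_{n=0}^{d_K-1}$ be the Krylov basis generated from $|k_0\rangle=|\psi_0\rangle$ and $H$ by the Lanczos algorithm, where $d_K$ is the dimension of the Krylov space. For $t\in\mathbb{R}$ write $|\psi(t)\rangle=e^{-iHt}|\psi_0\rangle=\sum_{n=0}^{d_K-1}c_n(t)|k_n\rangle$ with $c_n(t)=\langle k_n|\psi(t)\rangle$, let $\rho_A(t)=\mathrm{Tr}_B(|\psi(t)\rangle\langle\psi(t)|)$, $\rho_A^{(n)}=\mathrm{Tr}_B(|k_n\rangle\langle k_n|)$, and let $K=K(t)=\sum_{n}n|c_n(t)|^2$ be the spread complexity. Then for every time $t$, $$S(\rho_A(t))\le d_K\left[\sum_{n=0}^{d_K-1}|c_n(t)|^2\,S(\rho_A^{(n)})+f(K)\right],\qquad f(K)=(1+K)\log(1+K)-K\log K,$$ where $S(\rho)=-\mathrm{Tr}(\rho\log\rho)$ is the von Neumann entropy.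
   Context: Lanczos algorithm: set $|k_0\rangle=|\psi_0\rangle$, $b_0=0$, $|k_{-1}\rangle=0$; for $n\ge0$ set $a_n=\langle k_n|H|k_n\rangle$, $|v_{n+1}\rangle=H|k_n\rangle-a_n|k_n\rangle-b_n|k_{n-1}\rangle$, $b_{n+1}=\sqrt{\langle v_{n+1}|v_{n+1}\rangle}$, $|k_{n+1}\rangle=|v_{n+1}\rangle/b_{n+1}$; the algorithm terminates when $b_{n+1}=0$, and the resulting orthonormal vectors $|k_0\rangle,\dots,|k_{d_K-1}\rangle$ form the Krylov basis. All logarithms are taken in the same base (natural), with the convention $0\log 0=0$. *)

theory Defs
  imports "Jordan_Normal_Form.Schur_Decomposition"
    "HOL-Computational_Algebra.Fundamental_Theorem_Algebra"
begin

definition braket :: "complex vec \<Rightarrow> complex vec \<Rightarrow> complex" where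
  "braket v w = (\<Sum>i<dim_vec v. cnj (v $ i) * w $ i)"

definition hermitian_mat :: "complex mat \<Rightarrow> bool" where
  "hermitian_mat H \<longleftrightarrow> square_mat H \<and> mat_adjoint H = H"

definition mat_exp :: "complex mat \<Rightarrow> complex mat" where
  "mat_exp M = mat (dim_row M) (dim_col M)
     (\<lambda>(i,j). \<Sum>k. (M ^\<^sub>m k) $$ (i,j) / of_nat (fact k))"

(* Lanczos iteration: state n = (k_{n-1}, k_n, b_n), with k_{-1} = 0, b_0 = 0 *)
fun lanczos :: "complex mat \<Rightarrow> complex vec \<Rightarrow> nat \<Rightarrow> complex vec \<times> complex vec \<times> real" where
  "lanczos H psi0 0 = (0\<^sub>v (dim_vec psi0), psi0, 0)"
| "lanczos H psi0 (Suc n) =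
     (let (kp, kc, b) = lanczos H psi0 n;
          a = braket kc (H *\<^sub>v kc);
          v = H *\<^sub>v kc - a \<cdot>\<^sub>v kc - complex_of_real b \<cdot>\<^sub>v kp;
          b' = sqrt (Re (braket v v))
      in (kc, complex_of_real (1 / b') \<cdot>\<^sub>v v, b'))"

definition krylov_vec :: "complex mat \<Rightarrow> complex vec \<Rightarrow> nat \<Rightarrow> complex vec" where
  "krylov_vec H psi0 n = fst (snd (lanczos H psi0 n))"

definition lanczos_b :: "complex mat \<Rightarrow> complex vec \<Rightarrow> nat \<Rightarrow> real" where
  "lanczos_b H psi0 n = snd (snd (lanczos H psi0 n))"

(* Krylov dimension d_K: the algorithm terminates at the first n with b_{n+1} = 0,
   leaving the basis |k_0>, ..., |k_n>, so d_K = n + 1 *)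
definition krylov_dim :: "complex mat \<Rightarrow> complex vec \<Rightarrow> nat" where
  "krylov_dim H psi0 = Suc (LEAST n. lanczos_b H psi0 (Suc n) = 0)"

definition proj :: "complex vec \<Rightarrow> complex mat" where
  "proj v = mat (dim_vec v) (dim_vec v) (\<lambda>(i,j). v $ i * cnj (v $ j))"

(* Partial trace over B, for H_A \<otimes> H_B = C^dA \<otimes> C^dB \<cong> C^(dA*dB),
   basis |i> \<otimes> |j> identified with index i*dB + j *)
definition ptrace_B :: "nat \<Rightarrow> nat \<Rightarrow> complex mat \<Rightarrow> complex mat" where
  "ptrace_B dA dB M = mat dA dA (\<lambda>(i,i'). \<Sum>j<dB. M $$ (i*dB + j, i'*dB + j))"

definition xlogx :: "real \<Rightarrow> real" where
  "xlogx x = (if x = 0 then 0 else x * ln x)"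

(* von Neumann entropy S(rho) = -Tr(rho log rho) = - sum over eigenvalues (with multiplicity)
   of lambda log lambda; eigenvalues of a density matrix are real *)
definition vn_entropy :: "complex mat \<Rightarrow> real" where
  "vn_entropy rho = - (\<Sum>x\<in>#proots (char_poly rho). xlogx (Re x))"

definition f_K :: "real \<Rightarrow> real" where
  "f_K K = xlogx (1 + K) - xlogx K"

end

theory Submission
  imports Defs
begin

text \<open>
  The Krylov space is invariant under \<open>H\<close>, hence under \<open>exp (-i H t)\<close>; thus
  \<open>\<psi>(t) = \<Sum>n. c n |k n\<rangle>\<close>, and \<open>p n = |c n|\<^sup>2\<close> is a probability vector on \<open>{0, \<dots>, d\<^sub>K - 1}\<close>.
  Write \<open>\<rho>(t)\<close> and \<open>\<rho>\<^sub>n\<close> for the reduced states of \<open>\<psi>(t)\<close> and of \<open>|k n\<rangle>\<close>. By Cauchy-Schwarz,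
  \<open>\<langle>x|\<rho>(t)|x\<rangle> \<le> d\<^sub>K \<Sum>n. p n \<langle>x|\<rho>\<^sub>n|x\<rangle>\<close>, i.e. \<open>\<rho>(t) \<le> d\<^sub>K \<sigma>\<close> for the mixture \<open>\<sigma> = \<Sum>n. p n \<rho>\<^sub>n\<close>.
  An operator inequality \<open>\<rho> \<le> d \<sigma>\<close> between density matrices passes to their spectra through the
  doubly stochastic matrix of overlaps of the two eigenbases, and Gibbs' inequality then gives
  \<open>S(\<rho>) \<le> d S(\<sigma>)\<close>. The mixture satisfies \<open>S(\<sigma>) \<le> H(p) + \<Sum>n. p n S(\<rho>\<^sub>n)\<close>, and
  \<open>H(p) \<le> f(K)\<close> because at fixed mean \<open>K\<close> the geometric distribution has maximal entropy.
\<close>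

section \<open>Bra-kets and orthonormal families\<close>

abbreviation lin_comb :: "nat \<Rightarrow> 'i set \<Rightarrow> ('i \<Rightarrow> complex) \<Rightarrow> ('i \<Rightarrow> complex vec) \<Rightarrow> complex vec" where
  "lin_comb n I c v \<equiv> vec n (\<lambda>a. \<Sum>i\<in>I. c i * v i $ a)"

lemma index_mult_mat_vec_sum:
  "(A :: 'a :: semiring_0 mat) \<in> carrier_mat n m \<Longrightarrow> x \<in> carrier_vec m \<Longrightarrow> i < n \<Longrightarrow> (A *\<^sub>v x) $ i = (\<Sum>j<m. A $$ (i,j) * x $ j)"
  by (auto simp: scalar_prod_def row_def lessThan_atLeast0)

lemma mult_unit_vec_index:
  "(A :: 'a :: semiring_1 mat) \<in> carrier_mat n n \<Longrightarrow> a < n \<Longrightarrow> b < n \<Longrightarrow> (A *\<^sub>v unit_vec n b) $ a = A $$ (a,b)"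
proof -
  assume A: "A \<in> carrier_mat n n" and ab: "a < n" "b < n"
  have "(A *\<^sub>v unit_vec n b) $ a = (\<Sum>c<n. A $$ (a,c) * unit_vec n b $ c)"
    by (rule index_mult_mat_vec_sum[OF A _ ab(1)]) simp
  also have "\<dots> = (\<Sum>c<n. if c = b then A $$ (a,c) else 0)"
    by (intro sum.cong) (auto simp: unit_vec_def)
  also have "\<dots> = A $$ (a,b)" using ab by simp
  finally show ?thesis .
qed

lemma smult_mat_mult_vec:
  "A \<in> carrier_mat n m \<Longrightarrow> x \<in> carrier_vec m \<Longrightarrow> (c \<cdot>\<^sub>m A) *\<^sub>v x = c \<cdot>\<^sub>v (A *\<^sub>v x)"
  by (intro eq_vecI) (auto simp: scalar_prod_def sum_distrib_left algebra_simps)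

lemma mult_mat_vec_lin_comb:
  assumes A: "A \<in> carrier_mat n m" and y: "\<And>j. j \<in> J \<Longrightarrow> y j \<in> carrier_vec m"
  shows "A *\<^sub>v lin_comb m J c y = lin_comb n J c (\<lambda>j. A *\<^sub>v y j)"
proof (rule eq_vecI)
  fix a assume "a < dim_vec (lin_comb n J c (\<lambda>j. A *\<^sub>v y j))"
  then have a: "a < n" by simp
  have "(A *\<^sub>v lin_comb m J c y) $ a = (\<Sum>b<m. A $$ (a,b) * (\<Sum>j\<in>J. c j * y j $ b))"
    using index_mult_mat_vec_sum[OF A _ a, of "lin_comb m J c y"] by simp
  also have "\<dots> = (\<Sum>j\<in>J. c j * (\<Sum>b<m. A $$ (a,b) * y j $ b))"
    by (simp add: sum_distrib_left mult.left_commute) (rule sum.swap)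
  also have "\<dots> = (\<Sum>j\<in>J. c j * (A *\<^sub>v y j) $ a)"
    by (intro sum.cong refl) (simp add: index_mult_mat_vec_sum[OF A y a] del: index_mult_mat_vec)
  finally show "(A *\<^sub>v lin_comb m J c y) $ a = lin_comb n J c (\<lambda>j. A *\<^sub>v y j) $ a"
    using a by simp
qed (use A in simp)

lemma braket_add_right:
  "v \<in> carrier_vec n \<Longrightarrow> w1 \<in> carrier_vec n \<Longrightarrow> w2 \<in> carrier_vec n \<Longrightarrow>
   braket v (w1 + w2) = braket v w1 + braket v w2"
  by (auto simp: braket_def sum.distrib algebra_simps)

lemma braket_minus_right:
  "v \<in> carrier_vec n \<Longrightarrow> w1 \<in> carrier_vec n \<Longrightarrow> w2 \<in> carrier_vec n \<Longrightarrow>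
   braket v (w1 - w2) = braket v w1 - braket v w2"
  by (auto simp: braket_def sum_subtractf algebra_simps)

lemma braket_smult_right:
  "v \<in> carrier_vec n \<Longrightarrow> w \<in> carrier_vec n \<Longrightarrow> braket v (a \<cdot>\<^sub>v w) = a * braket v w"
  by (auto simp: braket_def sum_distrib_left algebra_simps)

lemma braket_add_left:
  "v1 \<in> carrier_vec n \<Longrightarrow> v2 \<in> carrier_vec n \<Longrightarrow> w \<in> carrier_vec n \<Longrightarrow>
   braket (v1 + v2) w = braket v1 w + braket v2 w"
  by (auto simp: braket_def sum.distrib algebra_simps)

lemma braket_minus_left:
  "v1 \<in> carrier_vec n \<Longrightarrow> v2 \<in> carrier_vec n \<Longrightarrow> w \<in> carrier_vec n \<Longrightarrow>
   braket (v1 - v2) w = braket v1 w - braket v2 w"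
  by (auto simp: braket_def sum_subtractf algebra_simps)

lemma braket_smult_left:
  "v \<in> carrier_vec n \<Longrightarrow> w \<in> carrier_vec n \<Longrightarrow> braket (a \<cdot>\<^sub>v v) w = cnj a * braket v w"
  by (auto simp: braket_def sum_distrib_left algebra_simps)

lemma braket_cnj: "v \<in> carrier_vec n \<Longrightarrow> w \<in> carrier_vec n \<Longrightarrow> cnj (braket v w) = braket w v"
  by (auto simp: braket_def mult.commute)

lemma cmod_braket_commute:
  "v \<in> carrier_vec n \<Longrightarrow> w \<in> carrier_vec n \<Longrightarrow> cmod (braket v w) = cmod (braket w v)"
  by (metis braket_cnj complex_mod_cnj)

lemma cnj_mult_self: "cnj z * z = complex_of_real ((cmod z)\<^sup>2)"
  by (metis complex_norm_square mult.commute)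

lemma braket_self: "braket v v = of_real (\<Sum>i<dim_vec v. (cmod (v $ i))\<^sup>2)"
  by (simp add: braket_def cnj_mult_self)

lemma braket_self_Re: "Re (braket v v) = (\<Sum>i<dim_vec v. (cmod (v $ i))\<^sup>2)"
  by (simp only: braket_self Re_complex_of_real)

lemma braket_self_real: "braket v v = of_real (Re (braket v v))"
  by (simp add: braket_self)

lemma braket_self_nonneg: "Re (braket v v) \<ge> 0"
  by (simp add: braket_self sum_nonneg)

lemma braket_self_eq_0:
  assumes "v \<in> carrier_vec n" "braket v v = 0"
  shows "v = 0\<^sub>v n"
proof -
  have "(\<Sum>i<dim_vec v. (cmod (v $ i))\<^sup>2) = 0" using assms(2) braket_self_Re[of v] by simp
  then have "\<forall>i\<in>{..<dim_vec v}. (cmod (v $ i))\<^sup>2 = 0"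
    by (subst sum_nonneg_eq_0_iff[symmetric]) auto
  then show ?thesis using assms(1) by (intro eq_vecI) auto
qed

lemma braket_lin_comb_right:
  assumes "w \<in> carrier_vec n" "\<And>i. i \<in> I \<Longrightarrow> v i \<in> carrier_vec n"
  shows "braket w (lin_comb n I c v) = (\<Sum>i\<in>I. c i * braket w (v i))"
proof -
  have "braket w (lin_comb n I c v) = (\<Sum>a<n. \<Sum>i\<in>I. cnj (w $ a) * (c i * v i $ a))"
    using assms(1) by (simp add: braket_def sum_distrib_left)
  also have "\<dots> = (\<Sum>i\<in>I. c i * braket w (v i))"
    using assms by (subst sum.swap) (simp add: braket_def sum_distrib_left algebra_simps)
  finally show ?thesis .
qed

lemma braket_lin_comb_left:
  assumes "w \<in> carrier_vec n" "\<And>i. i \<in> I \<Longrightarrow> v i \<in> carrier_vec n"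
  shows "braket (lin_comb n I c v) w = (\<Sum>i\<in>I. cnj (c i) * braket (v i) w)"
proof -
  have "braket (lin_comb n I c v) w = cnj (braket w (lin_comb n I c v))"
    by (rule braket_cnj[symmetric]) (use assms(1) in simp_all)
  also have "\<dots> = (\<Sum>i\<in>I. cnj (c i) * braket (v i) w)"
    using assms by (simp add: braket_lin_comb_right braket_cnj[of w n])
  finally show ?thesis .
qed

lemma hermitian_entry:
  assumes "hermitian_mat A" "A \<in> carrier_mat n n" "i < n" "j < n"
  shows "A $$ (i,j) = cnj (A $$ (j,i))"
proof -
  have "mat_adjoint A $$ (i,j) = A $$ (i,j)" using assms(1) unfolding hermitian_mat_def by simp
  moreover have "mat_adjoint A $$ (i,j) = cnj (A $$ (j,i))"
    using assms(2-) unfolding mat_adjoint_def by (auto simp: mat_of_rows_def col_def)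
  ultimately show ?thesis by simp
qed

lemma hermitian_braket:
  assumes h: "hermitian_mat A" and A: "A \<in> carrier_mat n n"
    and x: "x \<in> carrier_vec n" and y: "y \<in> carrier_vec n"
  shows "braket x (A *\<^sub>v y) = braket (A *\<^sub>v x) y"
proof -
  have "braket x (A *\<^sub>v y) = (\<Sum>i<n. \<Sum>j<n. cnj (x $ i) * A $$ (i,j) * y $ j)"
    unfolding braket_def using x
    by (simp add: index_mult_mat_vec_sum[OF A y] sum_distrib_left mult.assoc del: index_mult_mat_vec)
  also have "\<dots> = (\<Sum>j<n. \<Sum>i<n. cnj (A $$ (j,i) * x $ i) * y $ j)"
  proof (subst sum.swap, intro sum.cong refl)
    fix i j assume "i \<in> {..<n}" "j \<in> {..<n}"
    then show "cnj (x $ j) * A $$ (j, i) * y $ i = cnj (A $$ (i, j) * x $ j) * y $ i"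
      using hermitian_entry[OF h A, of j i] by simp
  qed
  also have "\<dots> = braket (A *\<^sub>v x) y"
    unfolding braket_def using A
    by (simp add: index_mult_mat_vec_sum[OF A x] sum_distrib_right del: index_mult_mat_vec)
  finally show ?thesis .
qed

definition orthonormal :: "nat \<Rightarrow> (nat \<Rightarrow> complex vec) \<Rightarrow> bool" where
  "orthonormal k v \<longleftrightarrow> (\<forall>i<k. \<forall>j<k. braket (v i) (v j) = (if i = j then 1 else 0))"

lemma orthonormalD: "orthonormal k v \<Longrightarrow> i < k \<Longrightarrow> j < k \<Longrightarrow> braket (v i) (v j) = (if i = j then 1 else 0)"
  by (simp add: orthonormal_def)

lemma orthonormal_Suc:
  assumes "\<And>i. i \<le> k \<Longrightarrow> v i \<in> carrier_vec n"
  shows "orthonormal (Suc k) v \<longleftrightarrow>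
    orthonormal k v \<and> braket (v k) (v k) = 1 \<and> (\<forall>j<k. braket (v j) (v k) = 0)"
proof -
  have "braket (v k) (v j) = cnj (braket (v j) (v k))" if "j < k" for j
    using assms that by (simp add: braket_cnj[of _ n])
  then show ?thesis unfolding orthonormal_def less_Suc_eq by auto
qed

lemma braket_lin_comb_orthonormal:
  assumes "orthonormal k v" "\<And>i. i < k \<Longrightarrow> v i \<in> carrier_vec n" "j < k"
  shows "braket (v j) (lin_comb n {..<k} c v) = c j"
proof -
  have "braket (v j) (lin_comb n {..<k} c v) = (\<Sum>i<k. c i * braket (v j) (v i))"
    using assms by (intro braket_lin_comb_right) auto
  also have "\<dots> = (\<Sum>i<k. if i = j then c i else 0)"
    using assms by (intro sum.cong) (auto simp: orthonormalD)
  finally show ?thesis using assms(3) by simp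
qed

definition span_proj :: "nat \<Rightarrow> nat \<Rightarrow> (nat \<Rightarrow> complex vec) \<Rightarrow> complex mat" where
  "span_proj n k v = mat n n (\<lambda>(a,b). \<Sum>i<k. v i $ a * cnj (v i $ b))"

lemma span_proj_carrier[simp]: "span_proj n k v \<in> carrier_mat n n"
  by (simp add: span_proj_def)

lemma span_proj_mult_vec:
  assumes "x \<in> carrier_vec n" "\<And>i. i < k \<Longrightarrow> v i \<in> carrier_vec n"
  shows "span_proj n k v *\<^sub>v x = lin_comb n {..<k} (\<lambda>i. braket (v i) x) v"
proof (rule eq_vecI)
  fix a assume "a < dim_vec (lin_comb n {..<k} (\<lambda>i. braket (v i) x) v)"
  then have a: "a < n" by simp
  have "(span_proj n k v *\<^sub>v x) $ a = (\<Sum>b<n. span_proj n k v $$ (a,b) * x $ b)"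
    by (rule index_mult_mat_vec_sum[OF span_proj_carrier assms(1) a])
  also have "\<dots> = (\<Sum>b<n. (\<Sum>i<k. v i $ a * cnj (v i $ b)) * x $ b)"
    using a by (simp add: span_proj_def)
  also have "\<dots> = (\<Sum>i<k. \<Sum>b<n. v i $ a * (cnj (v i $ b) * x $ b))"
    by (simp add: sum_distrib_left sum_distrib_right ac_simps) (rule sum.swap)
  also have "\<dots> = (\<Sum>i<k. braket (v i) x * v i $ a)"
    using assms(2) by (intro sum.cong refl) (simp add: braket_def sum_distrib_left sum_distrib_right
        ac_simps carrier_vecD[OF assms(2)])
  finally show "(span_proj n k v *\<^sub>v x) $ a = lin_comb n {..<k} (\<lambda>i. braket (v i) x) v $ a"
    using a by simp
qed (simp add: span_proj_def)

lemma braket_span_proj: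
  assumes "x \<in> carrier_vec n" "\<And>i. i < k \<Longrightarrow> v i \<in> carrier_vec n" "orthonormal k v" "j < k"
  shows "braket (v j) (span_proj n k v *\<^sub>v x) = braket (v j) x"
  using braket_lin_comb_orthonormal[OF assms(3,2,4)] by (simp add: span_proj_mult_vec[OF assms(1,2)])

lemma bessel_inequality:
  assumes x: "x \<in> carrier_vec n" and vc: "\<And>i. i < k \<Longrightarrow> v i \<in> carrier_vec n"
    and on: "orthonormal k v"
  shows "(\<Sum>i<k. (cmod (braket (v i) x))\<^sup>2) \<le> Re (braket x x)"
proof -
  define P where "P = lin_comb n {..<k} (\<lambda>i. braket (v i) x) v"
  have Pc: "P \<in> carrier_vec n" unfolding P_def by simp
  define y where "y = x - P"
  have yc: "y \<in> carrier_vec n" unfolding y_def using x Pc by simp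
  have vy: "braket (v j) y = 0" if "j < k" for j
    using braket_minus_right[OF vc[OF that] x Pc] braket_lin_comb_orthonormal[OF on vc that]
    unfolding y_def P_def by simp
  have Py: "braket P y = 0"
    unfolding P_def by (subst braket_lin_comb_left[OF yc]) (use vc vy in auto)
  have "braket x (v i) * braket (v i) x = complex_of_real ((cmod (braket (v i) x))\<^sup>2)" if "i < k" for i
    using braket_cnj[OF vc[OF that] x] by (metis cnj_mult_self)
  then have xP: "braket x P = complex_of_real (\<Sum>i<k. (cmod (braket (v i) x))\<^sup>2)"
    unfolding P_def of_real_sum by (subst braket_lin_comb_right[OF x]) (use vc in \<open>auto simp: mult.commute\<close>)
  have "braket y y = braket x y - braket P y" by (subst (1) y_def) (rule braket_minus_left[OF x Pc yc])
  also have "\<dots> = braket x y" using Py by simp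
  also have "\<dots> = braket x x - braket x P" unfolding y_def by (rule braket_minus_right[OF x x Pc])
  finally have "Re (braket y y) = Re (braket x x) - (\<Sum>i<k. (cmod (braket (v i) x))\<^sup>2)"
    by (simp add: xP)
  with braket_self_nonneg[of y] show ?thesis by simp
qed

lemma orthonormal_le_dim:
  assumes vc: "\<And>i. i < k \<Longrightarrow> v i \<in> carrier_vec n" and on: "orthonormal k v"
  shows "k \<le> n"
proof -
  define e where "e a = (unit_vec n a :: complex vec)" for a
  have ve: "braket (v i) (e a) = cnj (v i $ a)" if "i < k" "a < n" for i a
    unfolding braket_def e_def using vc[OF that(1)] that(2)
    by (simp add: unit_vec_def if_distrib cong: if_cong)
  have "real k = (\<Sum>i<k. Re (braket (v i) (v i)))" using on by (simp add: orthonormalD)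
  also have "\<dots> = (\<Sum>a<n. \<Sum>i<k. (cmod (braket (v i) (e a)))\<^sup>2)"
    using ve by (subst sum.swap) (intro sum.cong refl, simp add: braket_self_Re carrier_vecD[OF vc])
  also have "\<dots> \<le> (\<Sum>a<n. Re (braket (e a) (e a)))"
    by (intro sum_mono bessel_inequality[OF _ vc on]) (simp add: e_def)
  also have "\<dots> = real n"
    by (simp add: braket_def e_def unit_vec_def if_distrib cong: if_cong)
  finally show ?thesis by simp
qed

section \<open>The spectral theorem for Hermitian matrices\<close>

definition mat_trace :: "complex mat \<Rightarrow> complex" where
  "mat_trace M = (\<Sum>i<dim_row M. M $$ (i,i))"

lemma mat_trace_mult_comm:
  assumes "A \<in> carrier_mat n m" "B \<in> carrier_mat m n"
  shows "mat_trace (A * B) = mat_trace (B * A)"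
proof -
  have "mat_trace (A * B) = (\<Sum>i<n. \<Sum>j<m. A $$ (i,j) * B $$ (j,i))"
    using assms unfolding mat_trace_def by (intro sum.cong) (auto simp: scalar_prod_def lessThan_atLeast0)
  also have "\<dots> = (\<Sum>j<m. \<Sum>i<n. B $$ (j,i) * A $$ (i,j))"
    by (subst sum.swap) (simp add: mult.commute)
  also have "\<dots> = mat_trace (B * A)"
    using assms unfolding mat_trace_def by (intro sum.cong) (auto simp: scalar_prod_def lessThan_atLeast0)
  finally show ?thesis .
qed

lemma mat_trace_similar:
  assumes "similar_mat_wit C B P Q" "C \<in> carrier_mat n n"
  shows "mat_trace C = mat_trace B"
proof -
  note s = similar_mat_witD2[OF assms(2,1)]
  have "mat_trace C = mat_trace (P * B * Q)" using s by simp
  also have "\<dots> = mat_trace (Q * (P * B))" using s by (intro mat_trace_mult_comm[of _ n n]) auto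
  also have "Q * (P * B) = (Q * P) * B" by (rule assoc_mult_mat[symmetric]) (use s in auto)
  finally show ?thesis using s by simp
qed

lemma mat_trace_diag: "mat_trace B = sum_list (diag_mat B)"
  by (simp add: mat_trace_def diag_mat_def sum_list_sum_nth lessThan_atLeast0)

lemma mat_trace_span_proj:
  assumes "orthonormal k v" "\<And>i. i < k \<Longrightarrow> v i \<in> carrier_vec n"
  shows "mat_trace (span_proj n k v) = of_nat k"
proof -
  have "mat_trace (span_proj n k v) = (\<Sum>a<n. \<Sum>i<k. v i $ a * cnj (v i $ a))"
    by (simp add: mat_trace_def span_proj_def)
  also have "\<dots> = (\<Sum>i<k. braket (v i) (v i))"
    by (subst sum.swap) (intro sum.cong refl, simp add: braket_def carrier_vecD[OF assms(2)] mult.commute)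
  also have "\<dots> = of_nat k" using assms(1) by (simp add: orthonormalD)
  finally show ?thesis .
qed

lemma eigenvalue_ne_of_mat_trace:
  assumes C: "C \<in> carrier_mat n n" and tr: "mat_trace C \<noteq> of_nat n * c"
  shows "\<exists>\<mu>. eigenvalue C \<mu> \<and> \<mu> \<noteq> c"
proof (rule ccontr)
  assume "\<nexists>\<mu>. eigenvalue C \<mu> \<and> \<mu> \<noteq> c"
  then have all: "eigenvalue C \<mu> \<Longrightarrow> \<mu> = c" for \<mu> by blast
  obtain as where cp: "char_poly C = (\<Prod>a\<leftarrow>as. [:- a, 1:])" and las: "length as = n"
    using char_poly_factorized[OF C] by blast
  have "a = c" if "a \<in> set as" for a
  proof -
    have "poly (char_poly C) a = 0"
      unfolding cp poly_prod_list using that by (auto simp: prod_list_zero_iff)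
    then show ?thesis using all eigenvalue_root_char_poly[OF C] by blast
  qed
  then have asr: "as = replicate n c" using las by (metis replicate_length_same)
  obtain B P Q where "schur_decomposition C as = (B,P,Q)" by (cases "schur_decomposition C as") auto
  from schur_decomposition[OF C cp this] have "similar_mat_wit C B P Q" "diag_mat B = as" by auto
  then have "mat_trace C = of_nat n * c"
    using mat_trace_similar[OF _ C] by (simp add: mat_trace_diag asr sum_list_replicate)
  with tr show False ..
qed

lemma hermitian_eigenvalue_real:
  assumes h: "hermitian_mat A" and A: "A \<in> carrier_mat n n"
    and x: "x \<in> carrier_vec n" "x \<noteq> 0\<^sub>v n" and Ax: "A *\<^sub>v x = \<mu> \<cdot>\<^sub>v x"
  shows "\<mu> = of_real (Re \<mu>)"
proof -
  have "braket x (A *\<^sub>v x) = braket (A *\<^sub>v x) x" by (rule hermitian_braket[OF h A x(1) x(1)])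
  then have "\<mu> * braket x x = cnj \<mu> * braket x x"
    unfolding Ax using x by (simp add: braket_smult_left[of _ n] braket_smult_right[of _ n])
  moreover have "braket x x \<noteq> 0" using braket_self_eq_0[OF x(1)] x(2) by blast
  ultimately have "\<mu> = cnj \<mu>" by simp
  then show ?thesis by (metis Reals_cnj_iff complex_is_Real_iff of_real_Re)
qed

lemma hermitian_unit_eigenvector:
  assumes h: "hermitian_mat A" and A: "A \<in> carrier_mat n n"
    and x: "x \<in> carrier_vec n" "x \<noteq> 0\<^sub>v n" and Ax: "A *\<^sub>v x = \<mu> \<cdot>\<^sub>v x"
  obtains s :: real where "braket (of_real s \<cdot>\<^sub>v x) (of_real s \<cdot>\<^sub>v x) = 1"
    and "A *\<^sub>v (of_real s \<cdot>\<^sub>v x) = of_real (Re \<mu>) \<cdot>\<^sub>v (of_real s \<cdot>\<^sub>v x)"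
proof
  define r where "r = Re (braket x x)"
  have bxr: "braket x x = of_real r" unfolding r_def by (rule braket_self_real)
  have "r > 0"
    using braket_self_nonneg[of x] braket_self_eq_0[OF x(1)] x(2) bxr unfolding r_def by force
  then show "braket (of_real (1 / sqrt r) \<cdot>\<^sub>v x) (of_real (1 / sqrt r) \<cdot>\<^sub>v x) = 1"
    using x by (simp add: braket_smult_left[of _ n] braket_smult_right[of _ n] bxr flip: of_real_mult)
  show "A *\<^sub>v (of_real (1 / sqrt r) \<cdot>\<^sub>v x) = of_real (Re \<mu>) \<cdot>\<^sub>v (of_real (1 / sqrt r) \<cdot>\<^sub>v x)"
    using A x hermitian_eigenvalue_real[OF h A x Ax]
    by (simp add: mult_mat_vec[of _ n n] Ax smult_smult_assoc mult.commute)
qed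

text \<open>Write \<open>x = P x + Q x\<close>. The \<open>P\<close>-component only sees the eigenvalue \<open>c\<close>, so \<open>\<mu> \<noteq> c\<close>
  forces \<open>P x = 0\<close>; on the range of \<open>Q\<close>, which \<open>A\<close> leaves invariant, the compression is \<open>A\<close>.\<close>
lemma compression_eigenvector:
  fixes n k :: nat and v :: "nat \<Rightarrow> complex vec"
  defines "P \<equiv> span_proj n k v" and "Q \<equiv> 1\<^sub>m n - span_proj n k v"
  assumes A: "A \<in> carrier_mat n n" and h: "hermitian_mat A"
    and vc: "\<And>i. i < k \<Longrightarrow> v i \<in> carrier_vec n" and on: "orthonormal k v"
    and ev: "\<And>i. i < k \<Longrightarrow> A *\<^sub>v v i = complex_of_real (lam i) \<cdot>\<^sub>v v i"
    and x: "x \<in> carrier_vec n" and Cx: "(Q * A * Q + c \<cdot>\<^sub>m P) *\<^sub>v x = \<mu> \<cdot>\<^sub>v x" and "\<mu> \<noteq> c"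
  shows "\<forall>j<k. braket (v j) x = 0" and "A *\<^sub>v x = \<mu> \<cdot>\<^sub>v x"
proof -
  have P: "P \<in> carrier_mat n n" and Q: "Q \<in> carrier_mat n n"
    unfolding P_def Q_def by (simp_all add: minus_carrier_mat)
  have Qy: "Q *\<^sub>v y = y - P *\<^sub>v y" if "y \<in> carrier_vec n" for y
    unfolding Q_def P_def using that by (simp add: minus_mult_distrib_mat_vec[of _ n n])
  have Py_0: "P *\<^sub>v y = 0\<^sub>v n" if "y \<in> carrier_vec n" "\<forall>j<k. braket (v j) y = 0" for y
    using span_proj_mult_vec[OF that(1) vc] that(2) unfolding P_def by (auto intro: eq_vecI)
  have bQ: "braket (v j) (Q *\<^sub>v y) = 0" if "y \<in> carrier_vec n" "j < k" for y j
    using braket_minus_right[OF vc[OF that(2)] that(1), of "P *\<^sub>v y"] P that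
      braket_span_proj[OF that(1) vc on that(2)] unfolding Qy[OF that(1)] P_def by simp
  have Cx_eq: "(Q * A * Q + c \<cdot>\<^sub>m P) *\<^sub>v x = Q *\<^sub>v (A *\<^sub>v (Q *\<^sub>v x)) + c \<cdot>\<^sub>v (P *\<^sub>v x)"
    using A P Q x by (simp add: add_mult_distrib_mat_vec[of _ n n] assoc_mult_mat_vec[of _ n n _ n]
        smult_mat_mult_vec[OF P x])
  show orth: "\<forall>j<k. braket (v j) x = 0"
  proof (intro allI impI)
    fix j assume j: "j < k"
    have "c * braket (v j) x = \<mu> * braket (v j) x"
      using arg_cong[OF Cx, of "braket (v j)"] Cx_eq x Q A P j vc
      by (simp add: braket_add_right[of _ n] braket_smult_right[of _ n] bQ
          braket_span_proj[OF x vc on j, folded P_def])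
    then show "braket (v j) x = 0" using \<open>\<mu> \<noteq> c\<close> by simp
  qed
  have Ax: "A *\<^sub>v x \<in> carrier_vec n" using A x by simp
  have "\<forall>i<k. braket (v i) (A *\<^sub>v x) = 0"
    using orth vc x by (simp add: hermitian_braket[OF h A] ev braket_smult_left[of _ n])
  moreover have "c \<cdot>\<^sub>v 0\<^sub>v n = 0\<^sub>v n" by (intro eq_vecI) auto
  ultimately have "(Q * A * Q + c \<cdot>\<^sub>m P) *\<^sub>v x = A *\<^sub>v x"
    using Cx_eq Qy[OF x] Qy[OF Ax] Py_0[OF x orth] Py_0[OF Ax] Ax x by simp
  then show "A *\<^sub>v x = \<mu> \<cdot>\<^sub>v x" using Cx by simp
qed

lemma hermitian_eigenvector_orthogonal:
  assumes A: "A \<in> carrier_mat n n" and h: "hermitian_mat A" and "k < n"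
    and vc: "\<And>i. i < k \<Longrightarrow> v i \<in> carrier_vec n" and on: "orthonormal k v"
    and ev: "\<And>i. i < k \<Longrightarrow> A *\<^sub>v v i = complex_of_real (lam i) \<cdot>\<^sub>v v i"
  obtains u \<mu> where "u \<in> carrier_vec n" "braket u u = 1" "\<forall>j<k. braket (v j) u = 0"
    "A *\<^sub>v u = complex_of_real \<mu> \<cdot>\<^sub>v u"
proof -
  define P where "P = span_proj n k v"
  define Q where "Q = 1\<^sub>m n - span_proj n k v"
  have P: "P \<in> carrier_mat n n" and Q: "Q \<in> carrier_mat n n"
    unfolding P_def Q_def by (simp_all add: minus_carrier_mat)
  define T where "T = mat_trace (Q * A * Q)"
  text \<open>Choosing \<open>c\<close> off the mean \<open>T / (n - k)\<close>, the trace shows that \<open>c\<close> is not the only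
    eigenvalue of the compression.\<close>
  define c where "c = T / of_nat (n - k) + 1"
  have "mat_trace P = of_nat k" unfolding P_def by (rule mat_trace_span_proj[OF on vc])
  moreover have "mat_trace (Q * A * Q + c \<cdot>\<^sub>m P) = T + c * mat_trace P"
    using P Q A by (simp add: T_def mat_trace_def sum.distrib sum_distrib_left)
  ultimately have "mat_trace (Q * A * Q + c \<cdot>\<^sub>m P) = T + c * of_nat k" by simp
  also have "\<dots> \<noteq> of_nat n * c"
  proof
    assume "T + c * of_nat k = of_nat n * c"
    then have "T = c * of_nat (n - k)" using \<open>k < n\<close> by (simp add: of_nat_diff algebra_simps)
    then show False using \<open>k < n\<close> by (simp add: c_def distrib_right)
  qed
  finally have "mat_trace (Q * A * Q + c \<cdot>\<^sub>m P) \<noteq> of_nat n * c" .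
  moreover have "Q * A * Q + c \<cdot>\<^sub>m P \<in> carrier_mat n n" using A P Q by simp
  ultimately obtain \<mu> where "eigenvalue (Q * A * Q + c \<cdot>\<^sub>m P) \<mu>" "\<mu> \<noteq> c"
    using eigenvalue_ne_of_mat_trace by blast
  then obtain x where x: "x \<in> carrier_vec n" "x \<noteq> 0\<^sub>v n" and Cx: "(Q * A * Q + c \<cdot>\<^sub>m P) *\<^sub>v x = \<mu> \<cdot>\<^sub>v x"
    unfolding eigenvalue_def eigenvector_def using A P Q by auto
  note compr = compression_eigenvector[OF A h vc on ev x(1) Cx[unfolded P_def Q_def] \<open>\<mu> \<noteq> c\<close>]
  obtain s :: real where "braket (of_real s \<cdot>\<^sub>v x) (of_real s \<cdot>\<^sub>v x) = 1"
    and "A *\<^sub>v (of_real s \<cdot>\<^sub>v x) = of_real (Re \<mu>) \<cdot>\<^sub>v (of_real s \<cdot>\<^sub>v x)"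
    using hermitian_unit_eigenvector[OF h A x compr(2)] .
  moreover have "\<forall>j<k. braket (v j) (of_real s \<cdot>\<^sub>v x) = 0"
    using compr(1) vc x by (simp add: braket_smult_right[of _ n])
  ultimately show ?thesis using that[of "of_real s \<cdot>\<^sub>v x"] x(1) by simp
qed

lemma hermitian_orthonormal_eigenvectors:
  assumes A: "A \<in> carrier_mat n n" and h: "hermitian_mat A" and "k \<le> n"
  shows "\<exists>v lam. (\<forall>i<k. v i \<in> carrier_vec n) \<and> orthonormal k v \<and>
      (\<forall>i<k. A *\<^sub>v v i = complex_of_real (lam i) \<cdot>\<^sub>v v i)"
  using \<open>k \<le> n\<close>
proof (induction k)
  case 0
  then show ?case by (auto simp: orthonormal_def)
next
  case (Suc k)
  then obtain v lam where vc: "\<forall>i<k. v i \<in> carrier_vec n" and on: "orthonormal k v"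
    and ev: "\<forall>i<k. A *\<^sub>v v i = complex_of_real (lam i) \<cdot>\<^sub>v v i" by auto
  obtain u \<mu> where u: "u \<in> carrier_vec n" "braket u u = 1" "\<forall>j<k. braket (v j) u = 0"
    and Au: "A *\<^sub>v u = complex_of_real \<mu> \<cdot>\<^sub>v u"
    using hermitian_eigenvector_orthogonal[OF A h _ _ on, of lam] vc ev Suc.prems by auto
  have "\<forall>i<Suc k. (v(k := u)) i \<in> carrier_vec n" using vc u by (auto simp: less_Suc_eq)
  moreover have "orthonormal (Suc k) (v(k := u))"
    using vc u on by (subst orthonormal_Suc[of _ _ n]) (auto simp: orthonormal_def)
  moreover have "\<forall>i<Suc k. A *\<^sub>v (v(k := u)) i = complex_of_real ((lam(k := \<mu>)) i) \<cdot>\<^sub>v (v(k := u)) i"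
    using ev Au by (auto simp: less_Suc_eq)
  ultimately show ?case by blast
qed

locale orthonormal_basis =
  fixes n :: nat and v :: "nat \<Rightarrow> complex vec"
  assumes carrier: "\<And>i. i < n \<Longrightarrow> v i \<in> carrier_vec n"
    and orthonormal: "orthonormal n v"
begin

lemma dim_basis_vec[simp]: "i < n \<Longrightarrow> dim_vec (v i) = n"
  using carrier by auto

definition basis_mat :: "complex mat" where
  "basis_mat = mat n n (\<lambda>(a,i). v i $ a)"

definition basis_mat_adj :: "complex mat" where
  "basis_mat_adj = mat n n (\<lambda>(i,a). cnj (v i $ a))"

lemma basis_mat_carrier: "basis_mat \<in> carrier_mat n n" "basis_mat_adj \<in> carrier_mat n n"
  by (auto simp: basis_mat_def basis_mat_adj_def)

lemma basis_mat_adj_mult: "basis_mat_adj * basis_mat = 1\<^sub>m n"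
proof (rule eq_matI)
  fix i j assume ij: "i < dim_row (1\<^sub>m n)" "j < dim_col (1\<^sub>m n)"
  then have "(basis_mat_adj * basis_mat) $$ (i,j) = braket (v i) (v j)"
    by (simp add: basis_mat_def basis_mat_adj_def scalar_prod_def lessThan_atLeast0 braket_def)
  then show "(basis_mat_adj * basis_mat) $$ (i,j) = 1\<^sub>m n $$ (i,j)"
    using orthonormal ij by (simp add: orthonormalD)
qed (auto simp: basis_mat_def basis_mat_adj_def)

lemma basis_mat_mult_adj: "basis_mat * basis_mat_adj = 1\<^sub>m n"
  using mat_mult_left_right_inverse[OF basis_mat_carrier(2,1) basis_mat_adj_mult] .

lemma span_proj_eq_one: "span_proj n n v = 1\<^sub>m n"
proof -
  have "basis_mat * basis_mat_adj = span_proj n n v"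
    by (rule eq_matI)
      (auto simp: basis_mat_def basis_mat_adj_def span_proj_def scalar_prod_def lessThan_atLeast0)
  then show ?thesis using basis_mat_mult_adj by simp
qed

lemma expansion:
  assumes "x \<in> carrier_vec n"
  shows "x = lin_comb n {..<n} (\<lambda>i. braket (v i) x) v"
  using span_proj_mult_vec[of x n n v, OF assms carrier] assms by (simp add: span_proj_eq_one)

lemma parseval:
  assumes "x \<in> carrier_vec n" "y \<in> carrier_vec n"
  shows "braket x y = (\<Sum>i<n. cnj (braket (v i) x) * braket (v i) y)"
  by (subst expansion[OF assms(1)], rule braket_lin_comb_left[OF assms(2)]) (use carrier in auto)

lemma sum_sq_braket:
  assumes "x \<in> carrier_vec n"
  shows "(\<Sum>i<n. (cmod (braket (v i) x))\<^sup>2) = Re (braket x x)"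
  using parseval[OF assms assms] by (simp add: cnj_mult_self)

end

lemma proots_prod_list_linear: "proots (\<Prod>i\<leftarrow>xs. [:- c i, 1:]) = mset (map c xs)"
proof (induction xs)
  case (Cons a xs)
  have "(\<Prod>i\<leftarrow>xs. [:- c i, 1:]) \<noteq> 0" by (auto simp: prod_list_zero_iff)
  then have "proots ([:- c a, 1:] * (\<Prod>i\<leftarrow>xs. [:- c i, 1:])) = {#c a#} + mset (map c xs)"
    using Cons.IH by (subst proots_mult) auto
  then show ?case by simp
qed simp

locale spectral_decomp = orthonormal_basis +
  fixes A :: "complex mat" and lam :: "nat \<Rightarrow> real"
  assumes carrier_mat: "A \<in> carrier_mat n n"
    and eigen: "\<And>i. i < n \<Longrightarrow> A *\<^sub>v v i = complex_of_real (lam i) \<cdot>\<^sub>v v i"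
begin

lemma mult_vec_expansion:
  assumes x: "x \<in> carrier_vec n"
  shows "A *\<^sub>v x = lin_comb n {..<n} (\<lambda>i. complex_of_real (lam i) * braket (v i) x) v"
proof -
  have "A *\<^sub>v x = lin_comb n {..<n} (\<lambda>i. braket (v i) x) (\<lambda>i. A *\<^sub>v v i)"
    by (subst expansion[OF x]) (rule mult_mat_vec_lin_comb[OF carrier_mat carrier], simp)
  also have "\<dots> = lin_comb n {..<n} (\<lambda>i. complex_of_real (lam i) * braket (v i) x) v"
    by (intro eq_vecI) (auto intro!: sum.cong simp: eigen)
  finally show ?thesis .
qed

lemma entry_expansion:
  assumes "a < n" "b < n"
  shows "A $$ (a,b) = (\<Sum>i<n. complex_of_real (lam i) * v i $ a * cnj (v i $ b))"
proof -
  have "braket (v i) (unit_vec n b) = cnj (v i $ b)" if "i < n" for i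
    using that assms(2) by (simp add: braket_def unit_vec_def if_distrib cong: if_cong)
  then show ?thesis
    using mult_vec_expansion[of "unit_vec n b"] mult_unit_vec_index[OF carrier_mat assms] assms
    by (simp add: ac_simps)
qed

lemma quadratic_form:
  assumes x: "x \<in> carrier_vec n"
  shows "Re (braket x (A *\<^sub>v x)) = (\<Sum>i<n. lam i * (cmod (braket (v i) x))\<^sup>2)"
proof -
  have "braket x (v i) * braket (v i) x = complex_of_real ((cmod (braket (v i) x))\<^sup>2)" if "i < n" for i
    using braket_cnj[OF carrier[OF that] x] by (metis cnj_mult_self)
  moreover have "braket x (A *\<^sub>v x) = (\<Sum>i<n. complex_of_real (lam i) * (braket x (v i) * braket (v i) x))"
    unfolding mult_vec_expansion[OF x]
    by (subst braket_lin_comb_right[OF x]) (use carrier in \<open>auto simp: ac_simps\<close>)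
  ultimately show ?thesis by simp
qed

lemma eigenvalue_eq: "i < n \<Longrightarrow> lam i = Re (braket (v i) (A *\<^sub>v v i))"
  using carrier orthonormal by (simp add: eigen braket_smult_right[of _ n] orthonormalD)

lemma eigenvalue_nonneg:
  assumes "\<And>x. x \<in> carrier_vec n \<Longrightarrow> Re (braket x (A *\<^sub>v x)) \<ge> 0" "i < n"
  shows "lam i \<ge> 0"
  using eigenvalue_eq assms carrier by simp

lemma trace_eq: "(\<Sum>a<n. A $$ (a,a)) = complex_of_real (\<Sum>i<n. lam i)"
proof -
  have "(\<Sum>a<n. A $$ (a,a)) = (\<Sum>a<n. \<Sum>i<n. complex_of_real (lam i) * (cnj (v i $ a) * v i $ a))"
    by (intro sum.cong refl) (simp add: entry_expansion ac_simps)
  also have "\<dots> = (\<Sum>i<n. complex_of_real (lam i) * braket (v i) (v i))"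
    by (subst sum.swap) (simp add: braket_def sum_distrib_left)
  also have "\<dots> = (\<Sum>i<n. complex_of_real (lam i))"
    using orthonormal by (simp add: orthonormalD)
  finally show ?thesis by simp
qed

lemma char_poly_eq: "char_poly A = (\<Prod>i\<leftarrow>[0..<n]. [:- complex_of_real (lam i), 1:])"
proof -
  define D where "D = mat n n (\<lambda>(i,j). if i = j then complex_of_real (lam i) else 0)"
  have D: "D \<in> carrier_mat n n" by (simp add: D_def)
  note U = basis_mat_carrier(1) and U' = basis_mat_carrier(2)
  have "A = basis_mat * D * basis_mat_adj"
  proof (rule eq_matI)
    fix a b assume "a < dim_row (basis_mat * D * basis_mat_adj)" "b < dim_col (basis_mat * D * basis_mat_adj)"
    then have ab: "a < n" "b < n" using U U' D by auto
    have "(basis_mat * D) $$ (a,i) = v i $ a * complex_of_real (lam i)" if "i < n" for i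
      using that ab by (simp add: basis_mat_def D_def scalar_prod_def if_distrib cong: if_cong)
    then show "A $$ (a,b) = (basis_mat * D * basis_mat_adj) $$ (a,b)"
      using ab U D by (simp add: entry_expansion scalar_prod_def lessThan_atLeast0 basis_mat_adj_def ac_simps)
  qed (use carrier_mat U U' in auto)
  then have "similar_mat A D"
    unfolding similar_mat_def
    using similar_mat_witI[OF basis_mat_mult_adj basis_mat_adj_mult _ carrier_mat D U U'] by blast
  then have "char_poly A = char_poly D" by (rule char_poly_similar)
  also have "\<dots> = (\<Prod>a\<leftarrow>diag_mat D. [:- a, 1:])"
    by (rule char_poly_upper_triangular[OF D]) (auto simp: upper_triangular_def D_def)
  also have "diag_mat D = map (\<lambda>i. complex_of_real (lam i)) [0..<n]"
    by (simp add: diag_mat_def D_def)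
  finally show ?thesis by (simp add: comp_def)
qed

lemma vn_entropy_eq: "vn_entropy A = - (\<Sum>i<n. xlogx (lam i))"
  unfolding vn_entropy_def char_poly_eq proots_prod_list_linear
  by (simp only: mset_map[symmetric] sum_mset_sum_list) (simp add: sum_list_sum_nth lessThan_atLeast0)

end

lemma hermitian_spectral_decomp:
  assumes "A \<in> carrier_mat n n" "hermitian_mat A"
  obtains v lam where "spectral_decomp n v A lam"
  using hermitian_orthonormal_eigenvectors[OF assms order.refl] assms(1)
  by (auto simp: spectral_decomp_def spectral_decomp_axioms_def orthonormal_basis_def)

section \<open>Entropy inequalities for probability vectors\<close>

text \<open>Since \<open>ln 0 = 0\<close> in Isabelle, the convention \<open>0 log 0 = 0\<close> is automatic.\<close>
lemma xlogx_eq: "xlogx x = x * ln x"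
  by (simp add: xlogx_def)

lemma xlogx_mult: "0 \<le> p \<Longrightarrow> 0 \<le> q \<Longrightarrow> xlogx (p * q) = q * xlogx p + p * xlogx q"
  by (cases "p = 0 \<or> q = 0") (auto simp: xlogx_eq ln_mult algebra_simps)

lemma xlogx_sum_product:
  assumes p0: "\<And>n. n < d \<Longrightarrow> p n \<ge> 0" and q0: "\<And>n a. n < d \<Longrightarrow> a < m \<Longrightarrow> q n a \<ge> 0"
    and q1: "\<And>n. n < d \<Longrightarrow> (\<Sum>a<m. q n a) = 1"
  shows "(\<Sum>n<d. \<Sum>a<m. xlogx (p n * q n a)) = (\<Sum>n<d. xlogx (p n)) + (\<Sum>n<d. p n * (\<Sum>a<m. xlogx (q n a)))"
proof -
  have "(\<Sum>a<m. xlogx (p n * q n a)) = xlogx (p n) + p n * (\<Sum>a<m. xlogx (q n a))" if "n < d" for n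
  proof -
    have "(\<Sum>a<m. xlogx (p n * q n a)) = (\<Sum>a<m. q n a * xlogx (p n) + p n * xlogx (q n a))"
      using p0 q0 that by (intro sum.cong refl) (simp add: xlogx_mult)
    then show ?thesis using q1[OF that] by (simp add: sum.distrib sum_distrib_left flip: sum_distrib_right)
  qed
  then show ?thesis by (simp add: sum.distrib)
qed

lemma gibbs_term:
  assumes "0 \<le> a" "0 \<le> b" "b = 0 \<Longrightarrow> a = 0"
  shows "a * ln b + a - b \<le> xlogx a"
proof (cases "a = 0")
  case False
  have a: "a > 0" using assms(1) False by simp
  have b: "b > 0" using assms(2,3) False by (cases "b = 0") auto
  have "a * ln (b / a) \<le> a * (b / a - 1)"
    using a b by (intro mult_left_mono ln_le_minus_one) auto
  moreover have "a * ln (b / a) = a * ln b - a * ln a" using a b by (simp add: ln_div right_diff_distrib)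
  moreover have "a * (b / a - 1) = b - a" using a by (simp add: field_simps)
  ultimately show ?thesis by (simp add: xlogx_eq)
qed (use assms in \<open>simp add: xlogx_def\<close>)

text \<open>Gibbs' inequality for the coupling \<open>r i * U i j\<close> of \<open>r\<close> and \<open>s\<close>.\<close>
lemma cross_entropy_doubly_stochastic_le:
  fixes r s :: "nat \<Rightarrow> real" and U :: "nat \<Rightarrow> nat \<Rightarrow> real"
  assumes r0: "\<And>i. i < m \<Longrightarrow> r i \<ge> 0" and s0: "\<And>j. j < m \<Longrightarrow> s j \<ge> 0"
    and rs: "(\<Sum>i<m. r i) = 1" and ss: "(\<Sum>j<m. s j) = 1"
    and U0: "\<And>i j. i < m \<Longrightarrow> j < m \<Longrightarrow> U i j \<ge> 0"
    and Ur: "\<And>i. i < m \<Longrightarrow> (\<Sum>j<m. U i j) = 1"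
    and Uc: "\<And>j. j < m \<Longrightarrow> (\<Sum>i<m. U i j) = 1"
    and supp: "\<And>i j. i < m \<Longrightarrow> j < m \<Longrightarrow> s j = 0 \<Longrightarrow> r i * U i j = 0"
  shows "(\<Sum>j<m. (\<Sum>i<m. r i * U i j) * ln (s j)) \<le> (\<Sum>i<m. xlogx (r i))"
proof -
  have weighted_gibbs: "U i j * (r i * ln (s j) + r i - s j) \<le> U i j * xlogx (r i)" if "i < m" "j < m" for i j
  proof (cases "U i j = 0")
    case False
    then have "s j = 0 \<Longrightarrow> r i = 0" using supp[OF that] by simp
    then show ?thesis using that by (intro mult_left_mono gibbs_term r0 s0 U0) auto
  qed simp
  have "(\<Sum>i<m. \<Sum>j<m. U i j * (r i * ln (s j) + r i - s j))
      = (\<Sum>i<m. \<Sum>j<m. r i * U i j * ln (s j)) + (\<Sum>i<m. r i * (\<Sum>j<m. U i j))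
        - (\<Sum>i<m. \<Sum>j<m. U i j * s j)"
    by (simp add: algebra_simps sum.distrib sum_subtractf sum_distrib_left)
  also have "(\<Sum>i<m. \<Sum>j<m. r i * U i j * ln (s j)) = (\<Sum>j<m. (\<Sum>i<m. r i * U i j) * ln (s j))"
    by (subst sum.swap) (simp add: sum_distrib_right)
  also have "(\<Sum>i<m. \<Sum>j<m. U i j * s j) = (\<Sum>j<m. (\<Sum>i<m. U i j) * s j)"
    by (subst sum.swap) (simp add: sum_distrib_right)
  finally have "(\<Sum>j<m. (\<Sum>i<m. r i * U i j) * ln (s j)) = (\<Sum>i<m. \<Sum>j<m. U i j * (r i * ln (s j) + r i - s j))"
    using rs ss Ur Uc by simp
  also have "\<dots> \<le> (\<Sum>i<m. \<Sum>j<m. U i j * xlogx (r i))" by (intro sum_mono weighted_gibbs) auto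
  also have "\<dots> = (\<Sum>i<m. (\<Sum>j<m. U i j) * xlogx (r i))" by (simp add: sum_distrib_right)
  also have "\<dots> = (\<Sum>i<m. xlogx (r i))" using Ur by simp
  finally show ?thesis .
qed

lemma entropy_le_of_doubly_stochastic_domination:
  fixes r s :: "nat \<Rightarrow> real" and U :: "nat \<Rightarrow> nat \<Rightarrow> real" and d :: real
  assumes r0: "\<And>i. i < m \<Longrightarrow> r i \<ge> 0" and s0: "\<And>j. j < m \<Longrightarrow> s j \<ge> 0"
    and rs: "(\<Sum>i<m. r i) = 1" and ss: "(\<Sum>j<m. s j) = 1"
    and U0: "\<And>i j. i < m \<Longrightarrow> j < m \<Longrightarrow> U i j \<ge> 0"
    and Ur: "\<And>i. i < m \<Longrightarrow> (\<Sum>j<m. U i j) = 1"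
    and Uc: "\<And>j. j < m \<Longrightarrow> (\<Sum>i<m. U i j) = 1"
    and dom: "\<And>j. j < m \<Longrightarrow> (\<Sum>i<m. r i * U i j) \<le> d * s j"
  shows "- (\<Sum>i<m. xlogx (r i)) \<le> d * - (\<Sum>j<m. xlogx (s j))"
proof -
  have "r i * U i j = 0" if "i < m" "j < m" "s j = 0" for i j
  proof -
    have "r i * U i j \<le> (\<Sum>i<m. r i * U i j)" using r0 U0 that by (intro member_le_sum) auto
    also have "\<dots> \<le> 0" using dom[OF \<open>j < m\<close>] \<open>s j = 0\<close> by simp
    finally show ?thesis using mult_nonneg_nonneg[OF r0[OF \<open>i < m\<close>] U0[OF that(1,2)]] by linarith
  qed
  then have "- (\<Sum>i<m. xlogx (r i)) \<le> (\<Sum>j<m. (\<Sum>i<m. r i * U i j) * - ln (s j))"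
    using cross_entropy_doubly_stochastic_le[OF r0 s0 rs ss U0 Ur Uc] by (simp add: sum_negf)
  also have "\<dots> \<le> (\<Sum>j<m. d * s j * - ln (s j))"
  proof (intro sum_mono mult_right_mono)
    fix j assume "j \<in> {..<m}"
    then have "s j \<le> 1" using s0 ss member_le_sum[of j "{..<m}" s] by auto
    then show "- ln (s j) \<ge> 0" using s0[of j] \<open>j \<in> {..<m}\<close> by (cases "s j = 0") (auto simp: less_le)
  qed (use dom in auto)
  also have "\<dots> = d * - (\<Sum>j<m. xlogx (s j))"
    by (simp add: xlogx_eq sum_distrib_left sum_negf mult.assoc)
  finally show ?thesis .
qed

lemma weighted_neg_ln_le:
  fixes P s :: "nat \<Rightarrow> real"
  assumes "\<mu> > 0" and P0: "\<And>j. j < m \<Longrightarrow> P j \<ge> 0" and Psum: "(\<Sum>j<m. P j) = 1"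
    and below: "\<And>j. j < m \<Longrightarrow> \<mu> * P j \<le> s j"
    and weight: "\<mu> * (\<Sum>j\<in>{j. j < m \<and> s j > 0}. P j / s j) \<le> 1"
  shows "(\<Sum>j<m. P j * - ln (s j)) \<le> - ln \<mu>"
proof -
  define S where "S = {j. j < m \<and> s j > 0}"
  have S: "finite S" "S \<subseteq> {..<m}" unfolding S_def by auto
  have "P j = 0" if "j < m" "j \<notin> S" for j
    using below[OF that(1)] P0[OF that(1)] that mult_pos_pos[OF \<open>\<mu> > 0\<close>, of "P j"]
    unfolding S_def by (cases "P j = 0") auto
  then have "(\<Sum>j<m. f j * P j) = (\<Sum>j\<in>S. f j * P j)" for f
    using S by (intro sum.mono_neutral_right) auto
  from this[of "\<lambda>_. 1"] this[of "\<lambda>j. - ln (s j)"]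
  have PS: "(\<Sum>j\<in>S. P j) = 1" and "(\<Sum>j<m. P j * - ln (s j)) = (\<Sum>j\<in>S. P j * - ln (s j))"
    using Psum by (simp_all add: mult.commute)
  moreover have "(\<Sum>j\<in>S. P j * (ln \<mu> - ln (s j))) \<le> (\<Sum>j\<in>S. P j * (\<mu> / s j - 1))"
  proof (intro sum_mono mult_left_mono)
    fix j assume "j \<in> S"
    then have "j < m" "s j > 0" unfolding S_def by auto
    then show "ln \<mu> - ln (s j) \<le> \<mu> / s j - 1" "P j \<ge> 0"
      using \<open>\<mu> > 0\<close> ln_le_minus_one[of "\<mu> / s j"] P0 by (simp_all add: ln_div)
  qed
  moreover have "(\<Sum>j\<in>S. P j * (\<mu> / s j - 1)) \<le> 0"
    using weight PS unfolding S_def[symmetric] by (simp add: algebra_simps sum_subtractf sum_distrib_left)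
  ultimately show ?thesis
    using PS by (simp add: algebra_simps sum_subtractf sum_negf flip: sum_distrib_right)
qed

text \<open>With \<open>P j k = |\<langle>w j|\<phi> k\<rangle>|\<^sup>2\<close> for an eigenbasis \<open>w\<close> of \<open>\<sigma> = \<Sum>k. \<mu> k |\<phi> k\<rangle>\<langle>\<phi> k|\<close>
  with eigenvalues \<open>s\<close>, the last hypothesis reads \<open>\<mu> k \<langle>\<phi> k|\<sigma>\<^sup>+|\<phi> k\<rangle> \<le> 1\<close>.\<close>
lemma entropy_le_entropy_weights:
  fixes s :: "nat \<Rightarrow> real" and \<mu> :: "'k \<Rightarrow> real" and P :: "nat \<Rightarrow> 'k \<Rightarrow> real"
  assumes K: "finite K"
    and sdef: "\<And>j. j < m \<Longrightarrow> s j = (\<Sum>k\<in>K. \<mu> k * P j k)"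
    and \<mu>0: "\<And>k. k \<in> K \<Longrightarrow> \<mu> k \<ge> 0"
    and P0: "\<And>j k. j < m \<Longrightarrow> k \<in> K \<Longrightarrow> P j k \<ge> 0"
    and Psum: "\<And>k. k \<in> K \<Longrightarrow> (\<Sum>j<m. P j k) = 1"
    and weight: "\<And>k. k \<in> K \<Longrightarrow> \<mu> k > 0 \<Longrightarrow> \<mu> k * (\<Sum>j\<in>{j. j < m \<and> s j > 0}. P j k / s j) \<le> 1"
  shows "- (\<Sum>j<m. xlogx (s j)) \<le> - (\<Sum>k\<in>K. xlogx (\<mu> k))"
proof -
  have "- (\<Sum>j<m. xlogx (s j)) = (\<Sum>k\<in>K. \<mu> k * (\<Sum>j<m. P j k * - ln (s j)))"
    by (simp add: xlogx_eq sdef sum_distrib_left sum_distrib_right sum_negf sum.swap[of _ K] ac_simps)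
  also have "\<dots> \<le> (\<Sum>k\<in>K. - xlogx (\<mu> k))"
  proof (intro sum_mono)
    fix k assume k: "k \<in> K"
    show "\<mu> k * (\<Sum>j<m. P j k * - ln (s j)) \<le> - xlogx (\<mu> k)"
    proof (cases "\<mu> k = 0")
      case False
      then have "\<mu> k > 0" using \<mu>0[OF k] by simp
      have "\<mu> k * P j k \<le> s j" if "j < m" for j
        unfolding sdef[OF that] using that k \<mu>0 P0 K by (intro member_le_sum) auto
      then have "(\<Sum>j<m. P j k * - ln (s j)) \<le> - ln (\<mu> k)"
        using weighted_neg_ln_le[OF \<open>\<mu> k > 0\<close> P0[OF _ k] Psum[OF k] _ weight[OF k \<open>\<mu> k > 0\<close>]] by blast
      then have "\<mu> k * (\<Sum>j<m. P j k * - ln (s j)) \<le> \<mu> k * - ln (\<mu> k)"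
        using \<open>\<mu> k > 0\<close> by (intro mult_left_mono) auto
      then show ?thesis by (simp add: xlogx_eq)
    qed (simp add: xlogx_eq)
  qed
  finally show ?thesis by (simp add: sum_negf)
qed

lemma gibbs_inequality:
  fixes p g :: "nat \<Rightarrow> real"
  assumes p0: "\<And>n. n < d \<Longrightarrow> p n \<ge> 0" and ps: "(\<Sum>n<d. p n) = 1"
    and g0: "\<And>n. n < d \<Longrightarrow> g n > 0" and gs: "(\<Sum>n<d. g n) \<le> 1"
  shows "- (\<Sum>n<d. xlogx (p n)) \<le> - (\<Sum>n<d. p n * ln (g n))"
proof -
  have "(\<Sum>n<d. p n * ln (g n) + p n - g n) \<le> (\<Sum>n<d. xlogx (p n))"
    using p0 g0 by (intro sum_mono gibbs_term) (simp_all add: less_imp_le order_less_imp_not_eq2)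
  then show ?thesis using ps gs by (simp add: sum.distrib sum_subtractf)
qed

text \<open>Among distributions on \<open>\<nat>\<close> with mean \<open>K\<close>, the geometric one maximizes the entropy,
  and its entropy is \<open>f_K K\<close>.\<close>
lemma entropy_le_f_K:
  fixes p :: "nat \<Rightarrow> real"
  assumes p0: "\<And>n. n < d \<Longrightarrow> p n \<ge> 0" and ps: "(\<Sum>n<d. p n) = 1"
  shows "- (\<Sum>n<d. xlogx (p n)) \<le> f_K (\<Sum>n<d. real n * p n)"
proof -
  define K where "K = (\<Sum>n<d. real n * p n)"
  have "K \<ge> 0" unfolding K_def using p0 by (intro sum_nonneg) auto
  show ?thesis
  proof (cases "K = 0")
    case True
    then have "\<forall>n\<in>{..<d}. real n * p n = 0"
      using p0 unfolding K_def by (subst sum_nonneg_eq_0_iff[symmetric]) auto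
    then have pz: "p n = 0" if "n < d" "n \<noteq> 0" for n using that by (auto dest: bspec[of _ _ n])
    have "d > 0" using ps by (cases d) auto
    have "(\<Sum>n<d. p n) = p 0"
      using pz \<open>d > 0\<close> by (intro sum.mono_neutral_right[of "{..<d}" "{0}", simplified]) auto
    then have "xlogx (p n) = 0" if "n < d" for n
      using that ps pz by (cases "n = 0") (auto simp: xlogx_eq)
    then show ?thesis using True unfolding K_def[symmetric] by (simp add: f_K_def xlogx_def)
  next
    case False
    with \<open>K \<ge> 0\<close> have "K > 0" by simp
    define q where "q = K / (1 + K)"
    define g where "g n = q ^ n / (1 + K)" for n :: nat
    have q: "q > 0" "1 - q = 1 / (1 + K)" unfolding q_def using \<open>K > 0\<close> by (auto simp: field_simps)
    have "(\<Sum>n<d. g n) = (1 - q) * (\<Sum>n<d. q ^ n)" unfolding g_def by (simp add: sum_divide_distrib q(2))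
    also have "\<dots> = 1 - q ^ d" by (rule one_diff_power_eq[symmetric])
    finally have "(\<Sum>n<d. g n) \<le> 1" using q by simp
    then have "- (\<Sum>n<d. xlogx (p n)) \<le> - (\<Sum>n<d. p n * ln (g n))"
      using gibbs_inequality[OF p0 ps] q \<open>K > 0\<close> by (simp add: g_def)
    also have "\<dots> = - ((\<Sum>n<d. real n * p n) * ln q - (\<Sum>n<d. p n) * ln (1 + K))"
    proof -
      have "ln (g n) = real n * ln q - ln (1 + K)" for n
        unfolding g_def using q \<open>K > 0\<close> by (simp add: ln_div ln_realpow)
      then show ?thesis by (simp add: right_diff_distrib sum_subtractf sum_distrib_right sum_distrib_left ac_simps)
    qed
    also have "\<dots> = f_K K"
      unfolding f_K_def xlogx_eq q_def K_def[symmetric] ps using \<open>K > 0\<close> by (simp add: ln_div algebra_simps)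
    finally show ?thesis unfolding K_def .
  qed
qed

section \<open>Entropy of dominated and of mixed states\<close>

context spectral_decomp
begin

lemma pseudo_inverse_vector:
  assumes \<phi>: "\<phi> \<in> carrier_vec n"
  defines "S \<equiv> {j. j < n \<and> lam j > 0}"
  defines "y \<equiv> lin_comb n S (\<lambda>j. braket (v j) \<phi> / complex_of_real (lam j)) v"
  shows "Re (braket y (A *\<^sub>v y)) = (\<Sum>j\<in>S. (cmod (braket (v j) \<phi>))\<^sup>2 / lam j)"
    and "braket \<phi> y = complex_of_real (\<Sum>j\<in>S. (cmod (braket (v j) \<phi>))\<^sup>2 / lam j)"
proof -
  define coef where "coef j = braket (v j) \<phi> / complex_of_real (lam j)" for j
  have S: "finite S" "S \<subseteq> {..<n}" unfolding S_def by auto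
  have y: "y \<in> carrier_vec n" unfolding y_def by simp
  have vy: "braket (v l) y = (if l \<in> S then coef l else 0)" if "l < n" for l
  proof -
    have "braket (v l) y = (\<Sum>j\<in>S. coef j * braket (v l) (v j))"
      unfolding y_def coef_def by (rule braket_lin_comb_right) (use that S carrier in auto)
    also have "\<dots> = (\<Sum>j\<in>S. if j = l then coef j else 0)"
      using orthonormal that S by (intro sum.cong refl) (auto simp: orthonormalD)
    finally show ?thesis using S by simp
  qed
  have "Re (braket y (A *\<^sub>v y)) = (\<Sum>l\<in>S. lam l * (cmod (coef l))\<^sup>2)"
    unfolding quadratic_form[OF y] using S by (intro sum.mono_neutral_cong_right) (auto simp: vy)
  also have "\<dots> = (\<Sum>j\<in>S. (cmod (braket (v j) \<phi>))\<^sup>2 / lam j)"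
    unfolding coef_def S_def by (intro sum.cong refl) (auto simp: norm_divide power_divide power2_eq_square)
  finally show "Re (braket y (A *\<^sub>v y)) = (\<Sum>j\<in>S. (cmod (braket (v j) \<phi>))\<^sup>2 / lam j)" .
  have "braket \<phi> y = (\<Sum>j\<in>S. coef j * braket \<phi> (v j))"
    unfolding y_def coef_def by (rule braket_lin_comb_right) (use \<phi> S carrier in auto)
  also have "\<dots> = (\<Sum>j\<in>S. complex_of_real ((cmod (braket (v j) \<phi>))\<^sup>2 / lam j))"
  proof (intro sum.cong refl)
    fix j assume "j \<in> S"
    then have "braket \<phi> (v j) = cnj (braket (v j) \<phi>)"
      using \<phi> S carrier by (auto simp: braket_cnj[of _ n])
    then have "coef j * braket \<phi> (v j) = braket (v j) \<phi> * cnj (braket (v j) \<phi>) / complex_of_real (lam j)"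
      unfolding coef_def by simp
    also have "\<dots> = complex_of_real ((cmod (braket (v j) \<phi>))\<^sup>2) / complex_of_real (lam j)"
      by (simp only: complex_norm_square)
    finally show "coef j * braket \<phi> (v j) = complex_of_real ((cmod (braket (v j) \<phi>))\<^sup>2 / lam j)"
      by simp
  qed
  finally show "braket \<phi> y = complex_of_real (\<Sum>j\<in>S. (cmod (braket (v j) \<phi>))\<^sup>2 / lam j)" by simp
qed

text \<open>For any decomposition \<open>A = \<Sum>k. \<mu> k |\<phi> k\<rangle>\<langle>\<phi> k|\<close>, each weight satisfies
  \<open>\<mu> k \<langle>\<phi> k|A\<^sup>+|\<phi> k\<rangle> \<le> 1\<close>, \<open>A\<^sup>+\<close> being the pseudo-inverse: test the decomposition
  on \<open>y = A\<^sup>+ \<phi> k\<close>.\<close>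
lemma ensemble_weight_le:
  fixes \<mu> :: "'k \<Rightarrow> real" and \<phi> :: "'k \<Rightarrow> complex vec"
  assumes K: "finite K" and k: "k \<in> K"
    and ens: "\<And>x. x \<in> carrier_vec n \<Longrightarrow> Re (braket x (A *\<^sub>v x)) = (\<Sum>k\<in>K. \<mu> k * (cmod (braket (\<phi> k) x))\<^sup>2)"
    and \<mu>0: "\<And>k. k \<in> K \<Longrightarrow> \<mu> k \<ge> 0" and \<phi>: "\<phi> k \<in> carrier_vec n"
  shows "\<mu> k * (\<Sum>j\<in>{j. j < n \<and> lam j > 0}. (cmod (braket (v j) (\<phi> k)))\<^sup>2 / lam j) \<le> 1"
proof -
  define X where "X = (\<Sum>j\<in>{j. j < n \<and> lam j > 0}. (cmod (braket (v j) (\<phi> k)))\<^sup>2 / lam j)"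
  define y where "y = lin_comb n {j. j < n \<and> lam j > 0} (\<lambda>j. braket (v j) (\<phi> k) / complex_of_real (lam j)) v"
  have "X \<ge> 0" unfolding X_def by (intro sum_nonneg) auto
  have "braket (\<phi> k) y = complex_of_real X"
    using pseudo_inverse_vector(2)[OF \<phi>] unfolding X_def y_def .
  then have "\<mu> k * X\<^sup>2 = \<mu> k * (cmod (braket (\<phi> k) y))\<^sup>2" using \<open>X \<ge> 0\<close> by simp
  also have "\<dots> \<le> (\<Sum>k'\<in>K. \<mu> k' * (cmod (braket (\<phi> k') y))\<^sup>2)"
    using K k \<mu>0 by (intro member_le_sum) auto
  also have "\<dots> = Re (braket y (A *\<^sub>v y))" by (rule ens[symmetric]) (simp add: y_def)
  also have "\<dots> = X" unfolding y_def X_def by (rule pseudo_inverse_vector(1)[OF \<phi>])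
  finally have "\<mu> k * X * X \<le> 1 * X" by (simp add: power2_eq_square ac_simps)
  then have "\<mu> k * X \<le> 1" if "X > 0" using that by (rule mult_right_le_imp_le)
  then show ?thesis using \<open>X \<ge> 0\<close> unfolding X_def[symmetric] by (cases "X = 0") auto
qed

lemma eigenvalues_distribution:
  assumes psd: "\<And>x. x \<in> carrier_vec n \<Longrightarrow> Re (braket x (A *\<^sub>v x)) \<ge> 0"
    and tr: "(\<Sum>a<n. A $$ (a,a)) = 1"
  shows "\<And>i. i < n \<Longrightarrow> lam i \<ge> 0" and "(\<Sum>i<n. lam i) = 1"
  using eigenvalue_nonneg[OF psd] trace_eq tr by (auto simp del: of_real_sum)

end

lemma entropy_le_of_operator_domination:
  assumes \<rho>: "spectral_decomp m u \<rho> r" and \<sigma>: "spectral_decomp m w \<sigma> s"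
    and r0: "\<And>i. i < m \<Longrightarrow> r i \<ge> 0" and s0: "\<And>j. j < m \<Longrightarrow> s j \<ge> 0"
    and rs: "(\<Sum>i<m. r i) = 1" and ss: "(\<Sum>j<m. s j) = 1"
    and dom: "\<And>x. x \<in> carrier_vec m \<Longrightarrow> Re (braket x (\<rho> *\<^sub>v x)) \<le> d * Re (braket x (\<sigma> *\<^sub>v x))"
  shows "- (\<Sum>i<m. xlogx (r i)) \<le> d * - (\<Sum>j<m. xlogx (s j))"
proof -
  interpret R: spectral_decomp m u \<rho> r by (rule \<rho>)
  interpret S: spectral_decomp m w \<sigma> s by (rule \<sigma>)
  show ?thesis
  proof (rule entropy_le_of_doubly_stochastic_domination[OF r0 s0 rs ss])
    let ?U = "\<lambda>i j. (cmod (braket (u i) (w j)))\<^sup>2"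
    show "?U i j \<ge> 0" for i j by simp
    show "(\<Sum>j<m. ?U i j) = 1" if "i < m" for i
      using S.sum_sq_braket[OF R.carrier[OF that]] R.orthonormal that R.carrier S.carrier
      by (simp add: cmod_braket_commute[of _ m] orthonormalD)
    show "(\<Sum>i<m. ?U i j) = 1" if "j < m" for j
      using R.sum_sq_braket[OF S.carrier[OF that]] S.orthonormal that by (simp add: orthonormalD)
    show "(\<Sum>i<m. r i * ?U i j) \<le> d * s j" if "j < m" for j
      using R.quadratic_form[OF S.carrier[OF that]] dom[OF S.carrier[OF that]] S.eigenvalue_eq[OF that]
      by simp
  qed
qed

lemma (in spectral_decomp) entropy_le_ensemble_entropy:
  fixes \<mu> :: "'k \<Rightarrow> real" and \<phi> :: "'k \<Rightarrow> complex vec"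
  assumes K: "finite K"
    and ens: "\<And>x. x \<in> carrier_vec n \<Longrightarrow> Re (braket x (A *\<^sub>v x)) = (\<Sum>k\<in>K. \<mu> k * (cmod (braket (\<phi> k) x))\<^sup>2)"
    and \<mu>0: "\<And>k. k \<in> K \<Longrightarrow> \<mu> k \<ge> 0"
    and \<phi>: "\<And>k. k \<in> K \<Longrightarrow> \<phi> k \<in> carrier_vec n"
    and \<phi>_unit: "\<And>k. k \<in> K \<Longrightarrow> braket (\<phi> k) (\<phi> k) = 1"
  shows "- (\<Sum>j<n. xlogx (lam j)) \<le> - (\<Sum>k\<in>K. xlogx (\<mu> k))"
proof (rule entropy_le_entropy_weights[OF K _ \<mu>0])
  let ?P = "\<lambda>j k. (cmod (braket (v j) (\<phi> k)))\<^sup>2"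
  show "lam j = (\<Sum>k\<in>K. \<mu> k * ?P j k)" if "j < n" for j
    using eigenvalue_eq[OF that] ens[OF carrier[OF that]] \<phi> carrier[OF that]
    by (auto intro!: sum.cong simp: cmod_braket_commute[of _ n])
  show "?P j k \<ge> 0" for j k by simp
  show "(\<Sum>j<n. ?P j k) = 1" if "k \<in> K" for k
    using sum_sq_braket[OF \<phi>[OF that]] \<phi>_unit[OF that] by simp
  show "\<mu> k * (\<Sum>j\<in>{j. j < n \<and> lam j > 0}. ?P j k / lam j) \<le> 1" if "k \<in> K" "\<mu> k > 0" for k
    by (rule ensemble_weight_le[OF K that(1) ens \<mu>0 \<phi>[OF that(1)]])
qed

section \<open>Density matrices\<close>

definition density_mat :: "nat \<Rightarrow> complex mat \<Rightarrow> bool" where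
  "density_mat n \<rho> \<longleftrightarrow> \<rho> \<in> carrier_mat n n \<and> hermitian_mat \<rho> \<and>
     (\<forall>x\<in>carrier_vec n. Re (braket x (\<rho> *\<^sub>v x)) \<ge> 0) \<and> (\<Sum>a<n. \<rho> $$ (a,a)) = 1"

lemma density_mat_spectral_decomp:
  assumes "density_mat n \<rho>"
  obtains v lam where "spectral_decomp n v \<rho> lam" "\<And>i. i < n \<Longrightarrow> lam i \<ge> 0" "(\<Sum>i<n. lam i) = 1"
proof -
  obtain v lam where sd: "spectral_decomp n v \<rho> lam"
    using hermitian_spectral_decomp assms unfolding density_mat_def by blast
  show ?thesis
    using that[OF sd] spectral_decomp.eigenvalues_distribution[OF sd] assms
    unfolding density_mat_def by blast
qed

lemma density_mats_spectral_decomp: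
  assumes "\<And>n. n < d \<Longrightarrow> density_mat m (\<rho> n)"
  obtains e lam where "\<And>n. n < d \<Longrightarrow> spectral_decomp m (e n) (\<rho> n) (lam n)"
    and "\<And>n a. n < d \<Longrightarrow> a < m \<Longrightarrow> lam n a \<ge> 0" and "\<And>n. n < d \<Longrightarrow> (\<Sum>a<m. lam n a) = 1"
proof -
  have "\<forall>n\<in>{..<d}. \<exists>el. spectral_decomp m (fst el) (\<rho> n) (snd el) \<and>
      (\<forall>a<m. snd el a \<ge> 0) \<and> (\<Sum>a<m. snd el a) = 1"
    using density_mat_spectral_decomp[OF assms] by (metis fst_conv snd_conv lessThan_iff)
  then obtain el where "\<forall>n\<in>{..<d}. spectral_decomp m (fst (el n)) (\<rho> n) (snd (el n)) \<and>
      (\<forall>a<m. snd (el n) a \<ge> 0) \<and> (\<Sum>a<m. snd (el n) a) = 1"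
    by (rule bchoice[elim_format]) blast
  then show ?thesis using that[of "\<lambda>n. fst (el n)" "\<lambda>n. snd (el n)"] by auto
qed

definition mat_mixture :: "nat \<Rightarrow> nat \<Rightarrow> (nat \<Rightarrow> real) \<Rightarrow> (nat \<Rightarrow> complex mat) \<Rightarrow> complex mat" where
  "mat_mixture m d p M = mat m m (\<lambda>(i,i'). \<Sum>n<d. complex_of_real (p n) * M n $$ (i,i'))"

lemma mat_mixture_carrier: "mat_mixture m d p M \<in> carrier_mat m m"
  by (simp add: mat_mixture_def)

lemma braket_mat_mixture:
  assumes x: "x \<in> carrier_vec m" and M: "\<And>n. n < d \<Longrightarrow> M n \<in> carrier_mat m m"
  shows "braket x (mat_mixture m d p M *\<^sub>v x) = (\<Sum>n<d. complex_of_real (p n) * braket x (M n *\<^sub>v x))"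
proof -
  have "braket x (N *\<^sub>v x) = (\<Sum>i<m. \<Sum>i'<m. cnj (x $ i) * N $$ (i,i') * x $ i')"
    if "N \<in> carrier_mat m m" for N
    using x by (simp add: braket_def index_mult_mat_vec_sum[OF that x] sum_distrib_left ac_simps
        del: index_mult_mat_vec)
  from this[OF mat_mixture_carrier] this[OF M] show ?thesis
    by (simp add: mat_mixture_def sum_distrib_left sum_distrib_right ac_simps sum.swap[of _ "{..<d}"])
qed

lemma density_mat_mixture:
  assumes \<rho>: "\<And>n. n < d \<Longrightarrow> density_mat m (\<rho> n)"
    and p0: "\<And>n. n < d \<Longrightarrow> p n \<ge> 0" and p1: "(\<Sum>n<d. p n) = 1"
  shows "density_mat m (mat_mixture m d p \<rho>)"
  unfolding density_mat_def
proof (intro conjI ballI)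
  have \<rho>c: "\<rho> n \<in> carrier_mat m m" and \<rho>h: "hermitian_mat (\<rho> n)" if "n < d" for n
    using \<rho>[OF that] unfolding density_mat_def by auto
  show "mat_mixture m d p \<rho> \<in> carrier_mat m m" by (rule mat_mixture_carrier)
  show "hermitian_mat (mat_mixture m d p \<rho>)"
    unfolding hermitian_mat_def
  proof (intro conjI eq_matI)
    fix i i' assume "i < dim_row (mat_mixture m d p \<rho>)" "i' < dim_col (mat_mixture m d p \<rho>)"
    then have ii: "i < m" "i' < m" by (auto simp: mat_mixture_def)
    then show "mat_adjoint (mat_mixture m d p \<rho>) $$ (i,i') = mat_mixture m d p \<rho> $$ (i,i')"
      unfolding mat_adjoint_def
      by (auto intro!: sum.cong simp: mat_of_rows_def col_def mat_mixture_def
          hermitian_entry[OF \<rho>h \<rho>c, of _ i i'])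
  qed (auto simp: mat_adjoint_def mat_mixture_def)
  show "Re (braket x (mat_mixture m d p \<rho> *\<^sub>v x)) \<ge> 0" if "x \<in> carrier_vec m" for x
    using braket_mat_mixture[OF that \<rho>c, where p=p] \<rho> p0 that
    by (auto intro!: sum_nonneg mult_nonneg_nonneg simp: density_mat_def)
  have "(\<Sum>a<m. mat_mixture m d p \<rho> $$ (a,a)) = (\<Sum>n<d. complex_of_real (p n) * (\<Sum>a<m. \<rho> n $$ (a,a)))"
    by (simp add: mat_mixture_def sum_distrib_left sum.swap[of _ "{..<d}"])
  also have "\<dots> = 1" using \<rho> p1 by (simp add: density_mat_def flip: of_real_sum)
  finally show "(\<Sum>a<m. mat_mixture m d p \<rho> $$ (a,a)) = 1" .
qed

lemma vn_entropy_le_of_domination: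
  assumes \<rho>: "density_mat m \<rho>" and \<sigma>: "density_mat m \<sigma>"
    and dom: "\<And>x. x \<in> carrier_vec m \<Longrightarrow> Re (braket x (\<rho> *\<^sub>v x)) \<le> d * Re (braket x (\<sigma> *\<^sub>v x))"
  shows "vn_entropy \<rho> \<le> d * vn_entropy \<sigma>"
proof -
  obtain u r where R: "spectral_decomp m u \<rho> r" "\<And>i. i < m \<Longrightarrow> r i \<ge> 0" "(\<Sum>i<m. r i) = 1"
    using density_mat_spectral_decomp[OF \<rho>] by blast
  obtain w s where S: "spectral_decomp m w \<sigma> s" "\<And>i. i < m \<Longrightarrow> s i \<ge> 0" "(\<Sum>i<m. s i) = 1"
    using density_mat_spectral_decomp[OF \<sigma>] by blast
  show ?thesis
    using entropy_le_of_operator_domination[OF R(1) S(1) R(2) S(2) R(3) S(3) dom]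
    by (simp add: spectral_decomp.vn_entropy_eq[OF R(1)] spectral_decomp.vn_entropy_eq[OF S(1)])
qed

text \<open>The eigen-decompositions of the \<open>\<rho> n\<close> together form an ensemble for the mixture, with
  weights \<open>p n * \<lambda> n a\<close>.\<close>
lemma vn_entropy_mixture_le:
  assumes \<rho>: "\<And>n. n < d \<Longrightarrow> density_mat m (\<rho> n)"
    and p0: "\<And>n. n < d \<Longrightarrow> p n \<ge> 0" and p1: "(\<Sum>n<d. p n) = 1"
  shows "vn_entropy (mat_mixture m d p \<rho>) \<le> - (\<Sum>n<d. xlogx (p n)) + (\<Sum>n<d. p n * vn_entropy (\<rho> n))"
proof -
  obtain e lam where E: "\<And>n. n < d \<Longrightarrow> spectral_decomp m (e n) (\<rho> n) (lam n)"
    and lam0: "\<And>n a. n < d \<Longrightarrow> a < m \<Longrightarrow> lam n a \<ge> 0"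
    and lam1: "\<And>n. n < d \<Longrightarrow> (\<Sum>a<m. lam n a) = 1"
    using density_mats_spectral_decomp[where \<rho> = \<rho>, OF \<rho>] by metis
  define \<sigma> where "\<sigma> = mat_mixture m d p \<rho>"
  obtain w s where S: "spectral_decomp m w \<sigma> s"
    using density_mat_spectral_decomp[OF density_mat_mixture[where \<rho>=\<rho>, OF \<rho> p0 p1]] unfolding \<sigma>_def by blast
  define K where "K = {..<d} \<times> {..<m}"
  define \<mu> where "\<mu> = (\<lambda>(n,a). p n * lam n a)"
  define \<phi> where "\<phi> = (\<lambda>(n,a). e n a)"
  have B: "orthonormal_basis m (e n)" if "n < d" for n using E[OF that] by (rule spectral_decomp.axioms(1))
  have "- (\<Sum>j<m. xlogx (s j)) \<le> - (\<Sum>q\<in>K. xlogx (\<mu> q))"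
  proof (rule spectral_decomp.entropy_le_ensemble_entropy[OF S])
    show "finite K" unfolding K_def by simp
    show "\<mu> q \<ge> 0" if "q \<in> K" for q using that p0 lam0 unfolding K_def \<mu>_def by auto
    show "\<phi> q \<in> carrier_vec m" "braket (\<phi> q) (\<phi> q) = 1" if "q \<in> K" for q
      using that orthonormal_basis.carrier[OF B] orthonormalD[OF orthonormal_basis.orthonormal[OF B]]
      unfolding K_def \<phi>_def by auto
    show "Re (braket x (\<sigma> *\<^sub>v x)) = (\<Sum>q\<in>K. \<mu> q * (cmod (braket (\<phi> q) x))\<^sup>2)"
      if x: "x \<in> carrier_vec m" for x
    proof -
      have "\<rho> n \<in> carrier_mat m m" if "n < d" for n using \<rho>[OF that] by (simp add: density_mat_def)
      then have "Re (braket x (\<sigma> *\<^sub>v x)) = (\<Sum>n<d. p n * Re (braket x (\<rho> n *\<^sub>v x)))"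
        unfolding \<sigma>_def using braket_mat_mixture[OF x, where p = p and M = \<rho>] by simp
      also have "\<dots> = (\<Sum>n<d. \<Sum>a<m. \<mu> (n,a) * (cmod (braket (\<phi> (n,a)) x))\<^sup>2)"
        unfolding \<mu>_def \<phi>_def by (simp add: spectral_decomp.quadratic_form[OF E x] sum_distrib_left ac_simps)
      finally show ?thesis unfolding K_def by (simp add: sum.cartesian_product case_prod_beta)
    qed
  qed
  also have "(\<Sum>q\<in>K. xlogx (\<mu> q)) = (\<Sum>n<d. \<Sum>a<m. xlogx (p n * lam n a))"
    unfolding K_def \<mu>_def by (simp add: sum.cartesian_product case_prod_beta)
  also have "\<dots> = (\<Sum>n<d. xlogx (p n)) - (\<Sum>n<d. p n * vn_entropy (\<rho> n))"
    using xlogx_sum_product[OF p0 lam0 lam1] by (simp add: spectral_decomp.vn_entropy_eq[OF E] sum_negf)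
  finally show ?thesis unfolding \<sigma>_def using spectral_decomp.vn_entropy_eq[OF S] by (simp add: \<sigma>_def)
qed

section \<open>Reduced states of superpositions\<close>

abbreviation reduced_state :: "nat \<Rightarrow> nat \<Rightarrow> complex vec \<Rightarrow> complex mat" where
  "reduced_state dA dB \<psi> \<equiv> ptrace_B dA dB (proj \<psi>)"

lemma tensor_index_less: "i < dA \<Longrightarrow> j < dB \<Longrightarrow> i * dB + j < dA * (dB::nat)"
proof -
  assume "i < dA" "j < dB"
  then have "i * dB + j < Suc i * dB" by simp
  also have "\<dots> \<le> dA * dB" using \<open>i < dA\<close> by (intro mult_le_mono1) simp
  finally show ?thesis .
qed

lemma sum_tensor_index:
  fixes f :: "nat \<Rightarrow> 'a::comm_monoid_add"
  assumes "dB > 0"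
  shows "(\<Sum>i<dA. \<Sum>j<dB. f (i * dB + j)) = (\<Sum>a<dA * dB. f a)"
proof -
  have "(\<Sum>i<dA. \<Sum>j<dB. f (i * dB + j)) = (\<Sum>(i,j)\<in>{..<dA} \<times> {..<dB}. f (i * dB + j))"
    by (simp add: sum.cartesian_product)
  also have "\<dots> = (\<Sum>a<dA * dB. f a)"
    by (rule sum.reindex_bij_witness[where i = "\<lambda>a. (a div dB, a mod dB)" and j = "\<lambda>(i,j). i * dB + j"])
      (use assms in \<open>auto simp: less_mult_imp_div_less tensor_index_less\<close>)
  finally show ?thesis .
qed

lemma reduced_state_carrier: "reduced_state dA dB \<psi> \<in> carrier_mat dA dA"
  by (simp add: ptrace_B_def)

lemma reduced_state_index:
  assumes "\<psi> \<in> carrier_vec (dA * dB)" "i < dA" "i' < dA"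
  shows "reduced_state dA dB \<psi> $$ (i,i') = (\<Sum>j<dB. \<psi> $ (i * dB + j) * cnj (\<psi> $ (i' * dB + j)))"
  using assms tensor_index_less[OF assms(2)] tensor_index_less[OF assms(3)]
  by (simp add: ptrace_B_def proj_def)

text \<open>\<open>partial_braket dA dB x \<psi> j\<close> is \<open>\<langle>x \<otimes> j|\<psi>\<rangle>\<close>.\<close>
definition partial_braket :: "nat \<Rightarrow> nat \<Rightarrow> complex vec \<Rightarrow> complex vec \<Rightarrow> nat \<Rightarrow> complex" where
  "partial_braket dA dB x \<psi> j = (\<Sum>i<dA. cnj (x $ i) * \<psi> $ (i * dB + j))"

lemma braket_reduced_state:
  assumes \<psi>: "\<psi> \<in> carrier_vec (dA * dB)" and x: "x \<in> carrier_vec dA"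
  shows "braket x (reduced_state dA dB \<psi> *\<^sub>v x) = complex_of_real (\<Sum>j<dB. (cmod (partial_braket dA dB x \<psi> j))\<^sup>2)"
proof -
  have "braket x (reduced_state dA dB \<psi> *\<^sub>v x)
      = (\<Sum>i<dA. cnj (x $ i) * (\<Sum>i'<dA. reduced_state dA dB \<psi> $$ (i,i') * x $ i'))"
    using x by (simp add: braket_def index_mult_mat_vec_sum[OF reduced_state_carrier x] del: index_mult_mat_vec)
  also have "\<dots> = (\<Sum>i<dA. \<Sum>i'<dA. \<Sum>j<dB.
      (cnj (x $ i) * \<psi> $ (i * dB + j)) * cnj (cnj (x $ i') * \<psi> $ (i' * dB + j)))"
    by (intro sum.cong refl) (simp add: reduced_state_index[OF \<psi>] sum_distrib_left sum_distrib_right ac_simps)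
  also have "\<dots> = (\<Sum>j<dB. \<Sum>i<dA. \<Sum>i'<dA.
      (cnj (x $ i) * \<psi> $ (i * dB + j)) * cnj (cnj (x $ i') * \<psi> $ (i' * dB + j)))"
    by (simp add: sum.swap[of _ "{..<dB}"])
  also have "\<dots> = (\<Sum>j<dB. partial_braket dA dB x \<psi> j * cnj (partial_braket dA dB x \<psi> j))"
    unfolding partial_braket_def cnj_sum sum_product by simp
  finally show ?thesis unfolding of_real_sum complex_norm_square .
qed

lemma density_mat_reduced_state:
  assumes \<psi>: "\<psi> \<in> carrier_vec (dA * dB)" and unit: "braket \<psi> \<psi> = 1" and "dB > 0"
  shows "density_mat dA (reduced_state dA dB \<psi>)"
  unfolding density_mat_def
proof (intro conjI ballI)
  show "reduced_state dA dB \<psi> \<in> carrier_mat dA dA" by (rule reduced_state_carrier)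
  show "hermitian_mat (reduced_state dA dB \<psi>)"
    unfolding hermitian_mat_def
  proof (intro conjI eq_matI)
    fix i i' assume "i < dim_row (reduced_state dA dB \<psi>)" "i' < dim_col (reduced_state dA dB \<psi>)"
    then have ii: "i < dA" "i' < dA" by (auto simp: ptrace_B_def)
    then have "mat_adjoint (reduced_state dA dB \<psi>) $$ (i,i') = cnj (reduced_state dA dB \<psi> $$ (i',i))"
      using reduced_state_carrier[of dA dB \<psi>] unfolding mat_adjoint_def by (auto simp: mat_of_rows_def col_def)
    then show "mat_adjoint (reduced_state dA dB \<psi>) $$ (i,i') = reduced_state dA dB \<psi> $$ (i,i')"
      using ii by (simp add: reduced_state_index[OF \<psi>] mult.commute)
  qed (auto simp: mat_adjoint_def ptrace_B_def)
  show "Re (braket x (reduced_state dA dB \<psi> *\<^sub>v x)) \<ge> 0" if "x \<in> carrier_vec dA" for x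
    by (simp add: braket_reduced_state[OF \<psi> that] sum_nonneg)
  have "(\<Sum>i<dA. reduced_state dA dB \<psi> $$ (i,i)) = (\<Sum>i<dA. \<Sum>j<dB. cnj (\<psi> $ (i * dB + j)) * \<psi> $ (i * dB + j))"
    by (intro sum.cong refl) (simp add: reduced_state_index[OF \<psi>] mult.commute)
  also have "\<dots> = braket \<psi> \<psi>"
    using \<psi> sum_tensor_index[OF \<open>dB > 0\<close>, of "\<lambda>a. cnj (\<psi> $ a) * \<psi> $ a" dA] by (simp add: braket_def)
  finally show "(\<Sum>i<dA. reduced_state dA dB \<psi> $$ (i,i)) = 1" using unit by simp
qed

lemma square_sum_le_card_sum_squares:
  fixes a :: "nat \<Rightarrow> real"
  shows "(\<Sum>n<d. a n)\<^sup>2 \<le> real d * (\<Sum>n<d. (a n)\<^sup>2)"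
proof -
  have "0 \<le> (\<Sum>n<d. \<Sum>m<d. (a n - a m)\<^sup>2)" by (intro sum_nonneg) auto
  also have "\<dots> = 2 * (real d * (\<Sum>n<d. (a n)\<^sup>2)) - 2 * (\<Sum>n<d. a n)\<^sup>2"
    by (simp add: power2_diff sum.distrib sum_subtractf sum_distrib_left sum_distrib_right
        power2_eq_square algebra_simps)
  finally show ?thesis by simp
qed

lemma reduced_state_superposition_le:
  fixes c :: "nat \<Rightarrow> complex"
  assumes k: "\<And>n. n < d \<Longrightarrow> k n \<in> carrier_vec (dA * dB)" and x: "x \<in> carrier_vec dA"
  defines "\<psi> \<equiv> lin_comb (dA * dB) {..<d} c k"
  shows "Re (braket x (reduced_state dA dB \<psi> *\<^sub>v x))
    \<le> real d * Re (braket x (mat_mixture dA d (\<lambda>n. (cmod (c n))\<^sup>2) (\<lambda>n. reduced_state dA dB (k n)) *\<^sub>v x))"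
proof -
  have \<psi>c: "\<psi> \<in> carrier_vec (dA * dB)" unfolding \<psi>_def by simp
  have "partial_braket dA dB x \<psi> j = (\<Sum>n<d. c n * partial_braket dA dB x (k n) j)" if "j < dB" for j
  proof -
    have "partial_braket dA dB x \<psi> j = (\<Sum>i<dA. \<Sum>n<d. c n * (cnj (x $ i) * k n $ (i * dB + j)))"
      unfolding partial_braket_def \<psi>_def using tensor_index_less[OF _ that]
      by (simp add: sum_distrib_left ac_simps)
    also have "\<dots> = (\<Sum>n<d. c n * partial_braket dA dB x (k n) j)"
      unfolding partial_braket_def by (subst sum.swap) (simp add: sum_distrib_left)
    finally show ?thesis .
  qed
  then have "Re (braket x (reduced_state dA dB \<psi> *\<^sub>v x))
      = (\<Sum>j<dB. (cmod (\<Sum>n<d. c n * partial_braket dA dB x (k n) j))\<^sup>2)"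
    by (simp add: braket_reduced_state[OF \<psi>c x])
  also have "\<dots> \<le> (\<Sum>j<dB. real d * (\<Sum>n<d. (cmod (c n * partial_braket dA dB x (k n) j))\<^sup>2))"
  proof (intro sum_mono)
    fix j
    have "(cmod (\<Sum>n<d. c n * partial_braket dA dB x (k n) j))\<^sup>2
        \<le> (\<Sum>n<d. cmod (c n * partial_braket dA dB x (k n) j))\<^sup>2"
      by (rule power_mono[OF norm_sum norm_ge_zero])
    also have "\<dots> \<le> real d * (\<Sum>n<d. (cmod (c n * partial_braket dA dB x (k n) j))\<^sup>2)"
      by (rule square_sum_le_card_sum_squares)
    finally show "(cmod (\<Sum>n<d. c n * partial_braket dA dB x (k n) j))\<^sup>2
        \<le> real d * (\<Sum>n<d. (cmod (c n * partial_braket dA dB x (k n) j))\<^sup>2)" .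
  qed
  also have "\<dots> = real d * (\<Sum>n<d. \<Sum>j<dB. (cmod (c n))\<^sup>2 * (cmod (partial_braket dA dB x (k n) j))\<^sup>2)"
    by (subst sum.swap) (simp add: sum_distrib_left norm_mult power_mult_distrib)
  also have "\<dots> = real d * (\<Sum>n<d. (cmod (c n))\<^sup>2 * Re (braket x (reduced_state dA dB (k n) *\<^sub>v x)))"
    using k x by (simp add: braket_reduced_state sum_distrib_left)
  also have "\<dots> = real d * Re (braket x (mat_mixture dA d (\<lambda>n. (cmod (c n))\<^sup>2) (\<lambda>n. reduced_state dA dB (k n)) *\<^sub>v x))"
    using braket_mat_mixture[OF x reduced_state_carrier] by simp
  finally show ?thesis .
qed

theorem vn_entropy_reduced_superposition_le:
  assumes "dB > 0"
    and k: "\<And>n. n < d \<Longrightarrow> k n \<in> carrier_vec (dA * dB)" and k_unit: "\<And>n. n < d \<Longrightarrow> braket (k n) (k n) = 1"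
    and \<psi>: "\<psi> = lin_comb (dA * dB) {..<d} c k" and \<psi>_unit: "braket \<psi> \<psi> = 1"
    and c: "(\<Sum>n<d. (cmod (c n))\<^sup>2) = 1"
  shows "vn_entropy (reduced_state dA dB \<psi>)
    \<le> real d * (- (\<Sum>n<d. xlogx ((cmod (c n))\<^sup>2)) + (\<Sum>n<d. (cmod (c n))\<^sup>2 * vn_entropy (reduced_state dA dB (k n))))"
proof -
  define p where "p = (\<lambda>n. (cmod (c n))\<^sup>2)"
  have \<rho>: "density_mat dA (reduced_state dA dB (k n))" if "n < d" for n
    using density_mat_reduced_state k_unit k that \<open>dB > 0\<close> by blast
  have \<sigma>: "density_mat dA (mat_mixture dA d p (\<lambda>n. reduced_state dA dB (k n)))"
    by (rule density_mat_mixture) (use \<rho> c in \<open>auto simp: p_def\<close>)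
  have dom: "Re (braket x (reduced_state dA dB \<psi> *\<^sub>v x))
      \<le> real d * Re (braket x (mat_mixture dA d p (\<lambda>n. reduced_state dA dB (k n)) *\<^sub>v x))"
    if "x \<in> carrier_vec dA" for x
    using reduced_state_superposition_le[OF k that, where c=c] unfolding \<psi> p_def .
  have "vn_entropy (reduced_state dA dB \<psi>)
      \<le> real d * vn_entropy (mat_mixture dA d p (\<lambda>n. reduced_state dA dB (k n)))"
    by (rule vn_entropy_le_of_domination[OF density_mat_reduced_state[OF _ \<psi>_unit \<open>dB > 0\<close>] \<sigma> dom])
      (simp_all add: \<psi>)
  also have "\<dots> \<le> real d * (- (\<Sum>n<d. xlogx (p n)) + (\<Sum>n<d. p n * vn_entropy (reduced_state dA dB (k n))))"
    by (intro mult_left_mono vn_entropy_mixture_le) (use \<rho> c in \<open>auto simp: p_def\<close>)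
  finally show ?thesis unfolding p_def .
qed

section \<open>The Lanczos basis\<close>

locale krylov_basis =
  fixes H :: "complex mat" and \<psi>0 :: "complex vec" and N :: nat
  assumes H: "H \<in> carrier_mat N N" and hermitian: "hermitian_mat H"
    and \<psi>0: "\<psi>0 \<in> carrier_vec N" and \<psi>0_unit: "braket \<psi>0 \<psi>0 = 1"
begin

abbreviation "kv \<equiv> krylov_vec H \<psi>0"
abbreviation "\<beta> \<equiv> lanczos_b H \<psi>0"
abbreviation "dK \<equiv> krylov_dim H \<psi>0"

text \<open>\<open>\<alpha> n\<close>, \<open>\<beta> n\<close>, \<open>kprev n\<close> and \<open>resid n\<close> are \<open>a\<^sub>n\<close>, \<open>b\<^sub>n\<close>, \<open>|k\<^sub>n\<^sub>-\<^sub>1\<rangle>\<close> and \<open>|v\<^sub>n\<^sub>+\<^sub>1\<rangle>\<close> of the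
  Lanczos algorithm.\<close>
definition "kprev n = fst (lanczos H \<psi>0 n)"
definition "\<alpha> n = braket (kv n) (H *\<^sub>v kv n)"
definition "resid n = H *\<^sub>v kv n - \<alpha> n \<cdot>\<^sub>v kv n - complex_of_real (\<beta> n) \<cdot>\<^sub>v kprev n"

lemma lanczos_Suc_eq: "lanczos H \<psi>0 (Suc n) =
  (kv n, complex_of_real (1 / sqrt (Re (braket (resid n) (resid n)))) \<cdot>\<^sub>v resid n,
   sqrt (Re (braket (resid n) (resid n))))"
proof -
  obtain x y z where "lanczos H \<psi>0 n = (x,y,z)" by (metis prod_cases3)
  then show ?thesis by (simp add: resid_def \<alpha>_def kprev_def krylov_vec_def lanczos_b_def Let_def)
qed

lemma kv_0: "kv 0 = \<psi>0"
  by (simp add: krylov_vec_def)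

lemma \<beta>_Suc: "\<beta> (Suc n) = sqrt (Re (braket (resid n) (resid n)))"
  by (simp add: lanczos_b_def[of H \<psi>0 "Suc n"] lanczos_Suc_eq del: lanczos.simps)

lemma kv_Suc: "kv (Suc n) = complex_of_real (1 / \<beta> (Suc n)) \<cdot>\<^sub>v resid n"
  by (simp add: krylov_vec_def[of H \<psi>0 "Suc n"] lanczos_Suc_eq \<beta>_Suc del: lanczos.simps)

lemma kprev_eq: "kprev n = (if n = 0 then 0\<^sub>v N else kv (n - 1))"
proof (cases n)
  case 0
  then show ?thesis using \<psi>0 by (simp add: kprev_def)
qed (simp add: kprev_def lanczos_Suc_eq del: lanczos.simps)

lemma kv_kprev_carrier: "kv n \<in> carrier_vec N \<and> kprev n \<in> carrier_vec N"
proof (induction n)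
  case (Suc n)
  then have "resid n \<in> carrier_vec N" unfolding resid_def using H by simp
  then show ?case using Suc by (simp add: kv_Suc kprev_eq)
qed (simp add: kv_0 kprev_eq \<psi>0)

lemma kv_carrier: "kv n \<in> carrier_vec N" and kprev_carrier: "kprev n \<in> carrier_vec N"
  using kv_kprev_carrier by auto

lemma resid_carrier: "resid n \<in> carrier_vec N"
  unfolding resid_def using H kv_carrier kprev_carrier by simp

lemma dim_lanczos_vecs[simp]: "dim_vec (kv n) = N" "dim_vec (kprev n) = N" "dim_vec (resid n) = N"
  using kv_carrier kprev_carrier resid_carrier by auto

lemma resid_eq: "\<beta> (Suc n) \<noteq> 0 \<Longrightarrow> resid n = complex_of_real (\<beta> (Suc n)) \<cdot>\<^sub>v kv (Suc n)"
  using resid_carrier unfolding kv_Suc by (simp add: smult_smult_assoc)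

lemma resid_eq_0: "\<beta> (Suc n) = 0 \<Longrightarrow> resid n = 0\<^sub>v N"
  using braket_self_nonneg[of "resid n"] braket_self_real[of "resid n"] braket_self_eq_0[OF resid_carrier]
  unfolding \<beta>_Suc by simp

lemma H_kv: "H *\<^sub>v kv n = resid n + \<alpha> n \<cdot>\<^sub>v kv n + complex_of_real (\<beta> n) \<cdot>\<^sub>v kprev n"
  unfolding resid_def using H kv_carrier[of n] kprev_carrier[of n] by (intro eq_vecI) auto

lemma kv_Suc_unit:
  assumes "\<beta> (Suc n) \<noteq> 0"
  shows "braket (kv (Suc n)) (kv (Suc n)) = 1"
proof -
  define r where "r = Re (braket (resid n) (resid n))"
  have "r > 0" using assms braket_self_nonneg[of "resid n"] unfolding \<beta>_Suc r_def by simp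
  have "braket (kv (Suc n)) (kv (Suc n)) = complex_of_real (1 / \<beta> (Suc n) * (1 / \<beta> (Suc n)) * r)"
    unfolding kv_Suc r_def using resid_carrier
    by (subst braket_self_real) (simp add: braket_smult_left[of _ N] braket_smult_right[of _ N])
  also have "1 / \<beta> (Suc n) * (1 / \<beta> (Suc n)) * r = 1"
    using \<open>r > 0\<close> unfolding \<beta>_Suc r_def[symmetric] by (simp add: real_sqrt_mult_self)
  finally show ?thesis by simp
qed

lemma braket_kv_resid:
  assumes on: "orthonormal (Suc n) kv" and nz: "\<And>j. j < n \<Longrightarrow> \<beta> (Suc j) \<noteq> 0" and "i \<le> n"
  shows "braket (kv i) (resid n) = 0"
proof -
  have ob: "braket (kv i') (kv j) = (if i' = j then 1 else 0)" if "i' \<le> n" "j \<le> n" for i' j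
    using on that by (simp add: orthonormalD)
  have kprev: "braket (kv i') (kprev n) = (if n \<noteq> 0 \<and> i' = n - 1 then 1 else 0)" if "i' \<le> n" for i'
  proof (cases "n = 0")
    case True
    then show ?thesis by (simp add: kprev_eq braket_def)
  qed (use ob[of i' "n - 1"] that in \<open>simp add: kprev_eq\<close>)
  have "braket (kv i) (resid n) = braket (kv i) (H *\<^sub>v kv n) - \<alpha> n * braket (kv i) (kv n)
      - complex_of_real (\<beta> n) * braket (kv i) (kprev n)"
    unfolding resid_def using H kv_carrier kprev_carrier
    by (simp add: braket_minus_right[of _ N] braket_smult_right[of _ N])
  also have "\<dots> = 0"
  proof (cases "i = n")
    case True
    then show ?thesis using kprev[of n] ob[of n n] by (auto simp: \<alpha>_def)
  next
    case False
    with \<open>i \<le> n\<close> have "i < n" by simp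
    have "braket (kv i) (H *\<^sub>v kv n) = braket (H *\<^sub>v kv i) (kv n)"
      by (rule hermitian_braket[OF hermitian H kv_carrier kv_carrier])
    also have "\<dots> = complex_of_real (\<beta> (Suc i)) * braket (kv (Suc i)) (kv n)
        + cnj (\<alpha> i) * braket (kv i) (kv n) + complex_of_real (\<beta> i) * braket (kprev i) (kv n)"
      unfolding H_kv resid_eq[OF nz[OF \<open>i < n\<close>]] using kv_carrier kprev_carrier
      by (simp add: braket_add_left[of _ N] braket_smult_left[of _ N])
    also have "braket (kprev i) (kv n) = 0"
    proof (cases "i = 0")
      case True
      then show ?thesis by (simp add: kprev_eq braket_def)
    qed (use ob[of "i - 1" n] \<open>i < n\<close> in \<open>simp add: kprev_eq\<close>)
    finally show ?thesis using \<open>i < n\<close> ob kprev by auto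
  qed
  finally show ?thesis .
qed

lemma orthonormal_kv: "(\<And>j. j < n \<Longrightarrow> \<beta> (Suc j) \<noteq> 0) \<Longrightarrow> orthonormal (Suc n) kv"
proof (induction n)
  case 0
  then show ?case using \<psi>0_unit by (simp add: orthonormal_def kv_0)
next
  case (Suc n)
  then have on: "orthonormal (Suc n) kv" and nz: "\<beta> (Suc n) \<noteq> 0" by simp_all
  have "braket (kv j) (kv (Suc n)) = 0" if "j < Suc n" for j
    using braket_kv_resid[OF on, of j] Suc.prems that
    by (simp add: kv_Suc braket_smult_right[OF kv_carrier resid_carrier])
  then show ?case
    using on kv_Suc_unit[OF nz] kv_carrier by (subst orthonormal_Suc[of _ _ N]) auto
qed

text \<open>Termination makes the \<open>LEAST\<close> in \<^const>\<open>krylov_dim\<close> meaningful.\<close>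
lemma lanczos_terminates: "\<exists>n. \<beta> (Suc n) = 0"
proof (rule ccontr)
  assume "\<nexists>n. \<beta> (Suc n) = 0"
  then have "orthonormal (Suc N) kv" by (intro orthonormal_kv) auto
  from orthonormal_le_dim[OF kv_carrier this] show False by simp
qed

lemma \<beta>_krylov_dim: "\<beta> dK = 0"
  unfolding krylov_dim_def by (rule LeastI_ex[OF lanczos_terminates])

lemma \<beta>_Suc_less_krylov_dim: "Suc j < dK \<Longrightarrow> \<beta> (Suc j) \<noteq> 0"
  unfolding krylov_dim_def by (intro not_less_Least) simp

lemma orthonormal_krylov: "orthonormal dK kv"
  unfolding krylov_dim_def by (intro orthonormal_kv not_less_Least)

definition in_krylov :: "complex vec \<Rightarrow> bool" where
  "in_krylov x \<longleftrightarrow> (\<exists>g. x = lin_comb N {..<dK} g kv)"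

lemma in_krylov_expansion:
  assumes "in_krylov x"
  shows "x = lin_comb N {..<dK} (\<lambda>j. braket (kv j) x) kv"
proof -
  obtain g where g: "x = lin_comb N {..<dK} g kv" using assms unfolding in_krylov_def by blast
  then have "braket (kv i) x = g i" if "i < dK" for i
    using braket_lin_comb_orthonormal[OF orthonormal_krylov kv_carrier that] by simp
  then show ?thesis using g by (intro eq_vecI) auto
qed

lemma in_krylov_carrier: "in_krylov x \<Longrightarrow> x \<in> carrier_vec N"
  unfolding in_krylov_def by auto

lemma sum_sq_braket_krylov:
  assumes "in_krylov x"
  shows "(\<Sum>j<dK. (cmod (braket (kv j) x))\<^sup>2) = Re (braket x x)"
proof -
  have "braket x x = (\<Sum>j<dK. cnj (braket (kv j) x) * braket (kv j) x)"
    by (subst (1) in_krylov_expansion[OF assms], rule braket_lin_comb_left)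
      (use in_krylov_carrier[OF assms] kv_carrier in auto)
  then show ?thesis by (simp add: cnj_mult_self)
qed

lemma in_krylov_kv:
  assumes "j < dK"
  shows "in_krylov (kv j)"
proof -
  have "(\<Sum>l<dK. (if l = j then 1 else 0) * kv l $ a) = kv j $ a" for a
    using assms by (simp add: if_distrib[of "\<lambda>c. c * _"] cong: if_cong)
  then show ?thesis unfolding in_krylov_def by (intro exI[of _ "\<lambda>l. if l = j then 1 else 0"] eq_vecI) auto
qed

lemma in_krylov_zero: "in_krylov (0\<^sub>v N)"
  unfolding in_krylov_def by (rule exI[of _ "\<lambda>_. 0"]) (auto intro: eq_vecI)

lemma in_krylov_add:
  assumes "in_krylov x" "in_krylov y"
  shows "in_krylov (x + y)"
proof -
  obtain g h where "x = lin_comb N {..<dK} g kv" "y = lin_comb N {..<dK} h kv"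
    using assms unfolding in_krylov_def by blast
  then show ?thesis
    unfolding in_krylov_def by (intro exI[of _ "\<lambda>j. g j + h j"] eq_vecI) (auto simp: sum.distrib distrib_right)
qed

lemma in_krylov_smult:
  assumes "in_krylov x"
  shows "in_krylov (c \<cdot>\<^sub>v x)"
proof -
  obtain g where "x = lin_comb N {..<dK} g kv" using assms unfolding in_krylov_def by blast
  then show ?thesis
    unfolding in_krylov_def by (intro exI[of _ "\<lambda>j. c * g j"] eq_vecI) (auto simp: sum_distrib_left ac_simps)
qed

lemma in_krylov_lin_comb:
  "(\<And>j. j < m \<Longrightarrow> in_krylov (y j)) \<Longrightarrow> in_krylov (lin_comb N {..<m::nat} c y)"
proof (induction m)
  case 0
  have "lin_comb N {..<0} c y = 0\<^sub>v N" by (intro eq_vecI) auto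
  then show ?case using in_krylov_zero by simp
next
  case (Suc m)
  have "lin_comb N {..<Suc m} c y = lin_comb N {..<m} c y + c m \<cdot>\<^sub>v y m"
    using in_krylov_carrier[OF Suc.prems[of m]] by (intro eq_vecI) auto
  then show ?case using Suc by (simp add: in_krylov_add in_krylov_smult)
qed

lemma in_krylov_H_kv:
  assumes "i < dK"
  shows "in_krylov (H *\<^sub>v kv i)"
proof -
  have "in_krylov (resid i)"
  proof (cases "Suc i < dK")
    case True
    then show ?thesis using resid_eq[OF \<beta>_Suc_less_krylov_dim] in_krylov_smult in_krylov_kv by simp
  next
    case False
    then have "Suc i = dK" using assms by simp
    then show ?thesis using resid_eq_0 \<beta>_krylov_dim in_krylov_zero by metis
  qed
  moreover have "in_krylov (kprev i)" using assms by (simp add: kprev_eq in_krylov_zero in_krylov_kv)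
  ultimately show ?thesis
    unfolding H_kv using in_krylov_kv[OF assms] by (intro in_krylov_add in_krylov_smult)
qed

lemma in_krylov_H:
  assumes "in_krylov x"
  shows "in_krylov (H *\<^sub>v x)"
proof -
  from in_krylov_expansion[OF assms]
  have "H *\<^sub>v x = H *\<^sub>v lin_comb N {..<dK} (\<lambda>j. braket (kv j) x) kv" by (rule arg_cong)
  also have "\<dots> = lin_comb N {..<dK} (\<lambda>j. braket (kv j) x) (\<lambda>j. H *\<^sub>v kv j)"
    by (rule mult_mat_vec_lin_comb[OF H kv_carrier])
  finally show ?thesis using in_krylov_lin_comb in_krylov_H_kv by simp
qed

end

section \<open>Time evolution\<close>

lemma exp_sums_complex: "(\<lambda>k. z ^ k / fact k) sums exp (z::complex)"
  using exp_converges[of z] by (simp add: scaleR_conv_of_real divide_inverse mult.commute)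

lemma mult_mat_vec_fixed_sums:
  fixes P :: "complex mat"
  assumes P: "P \<in> carrier_mat n n" and x: "x \<in> carrier_vec n"
    and y: "\<And>k. y k \<in> carrier_vec n" and Py: "\<And>k. P *\<^sub>v y k = y k"
    and sums: "\<And>a. a < n \<Longrightarrow> (\<lambda>k. y k $ a) sums (x $ a)"
  shows "P *\<^sub>v x = x"
proof (rule eq_vecI)
  fix a assume "a < dim_vec x"
  then have a: "a < n" using x by simp
  have "(\<lambda>k. \<Sum>b<n. P $$ (a,b) * y k $ b) sums (\<Sum>b<n. P $$ (a,b) * x $ b)"
    by (intro sums_sum sums_mult) (simp add: sums)
  moreover have "(\<Sum>b<n. P $$ (a,b) * y k $ b) = y k $ a" for k
    using index_mult_mat_vec_sum[OF P y a, of k] Py[of k] by simp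
  ultimately have "(\<lambda>k. y k $ a) sums (P *\<^sub>v x) $ a"
    using index_mult_mat_vec_sum[OF P x a] by simp
  then show "(P *\<^sub>v x) $ a = x $ a" using sums[OF a] sums_unique2 by blast
qed (use P x in simp)

context spectral_decomp
begin

lemma mult_vec_power_smult:
  assumes x: "x \<in> carrier_vec n"
  shows "((z \<cdot>\<^sub>m A) ^\<^sub>m k) *\<^sub>v x = lin_comb n {..<n} (\<lambda>l. (z * lam l) ^ k * braket (v l) x) v"
proof -
  have M: "z \<cdot>\<^sub>m A \<in> carrier_mat n n" using carrier_mat by simp
  have ev: "eigenvector (z \<cdot>\<^sub>m A) (v l) (z * lam l)" if "l < n" for l
  proof -
    have "v l \<noteq> 0\<^sub>v n"
      using orthonormalD[OF orthonormal that that] by (auto simp: braket_def)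
    then show ?thesis
      unfolding eigenvector_def using carrier[OF that] M carrier_matD[OF carrier_mat]
      by (simp add: smult_mat_mult_vec[OF carrier_mat] eigen[OF that] smult_smult_assoc)
  qed
  have "((z \<cdot>\<^sub>m A) ^\<^sub>m k) *\<^sub>v x = lin_comb n {..<n} (\<lambda>l. braket (v l) x) (\<lambda>l. ((z \<cdot>\<^sub>m A) ^\<^sub>m k) *\<^sub>v v l)"
    by (subst expansion[OF x]) (rule mult_mat_vec_lin_comb, use M carrier in auto)
  also have "\<dots> = lin_comb n {..<n} (\<lambda>l. (z * lam l) ^ k * braket (v l) x) v"
    by (intro eq_vecI) (auto intro!: sum.cong simp: eigenvector_pow[OF M ev])
  finally show ?thesis .
qed

lemma power_smult_index:
  assumes "a < n" "b < n"
  shows "((z \<cdot>\<^sub>m A) ^\<^sub>m k) $$ (a,b) = (\<Sum>l<n. (z * lam l) ^ k * cnj (v l $ b) * v l $ a)"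
proof -
  have M: "z \<cdot>\<^sub>m A \<in> carrier_mat n n" using carrier_mat by simp
  have "braket (v l) (unit_vec n b) = cnj (v l $ b)" if "l < n" for l
    using that assms(2) by (simp add: braket_def unit_vec_def if_distrib cong: if_cong)
  moreover have "((z \<cdot>\<^sub>m A) ^\<^sub>m k) $$ (a,b) = (((z \<cdot>\<^sub>m A) ^\<^sub>m k) *\<^sub>v unit_vec n b) $ a"
    by (rule mult_unit_vec_index[OF pow_carrier_mat[OF M] assms, symmetric])
  ultimately show ?thesis
    using assms by (simp add: mult_vec_power_smult ac_simps)
qed

lemma mat_exp_smult_index:
  assumes "a < n" "b < n"
  shows "(\<lambda>k. ((z \<cdot>\<^sub>m A) ^\<^sub>m k) $$ (a,b) / fact k) sums (\<Sum>l<n. exp (z * lam l) * cnj (v l $ b) * v l $ a)"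
    and "mat_exp (z \<cdot>\<^sub>m A) $$ (a,b) = (\<Sum>l<n. exp (z * lam l) * cnj (v l $ b) * v l $ a)"
proof -
  show sums: "(\<lambda>k. ((z \<cdot>\<^sub>m A) ^\<^sub>m k) $$ (a,b) / fact k) sums (\<Sum>l<n. exp (z * lam l) * cnj (v l $ b) * v l $ a)"
  proof -
    have "(\<lambda>k. \<Sum>l<n. (z * lam l) ^ k / fact k * (cnj (v l $ b) * v l $ a))
        sums (\<Sum>l<n. exp (z * lam l) * (cnj (v l $ b) * v l $ a))"
      by (intro sums_sum sums_mult2 exp_sums_complex)
    moreover have "(\<lambda>k. ((z \<cdot>\<^sub>m A) ^\<^sub>m k) $$ (a,b) / fact k)
        = (\<lambda>k. \<Sum>l<n. (z * lam l) ^ k / fact k * (cnj (v l $ b) * v l $ a))"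
      by (simp add: power_smult_index[OF assms] sum_divide_distrib ac_simps)
    ultimately show ?thesis by (simp add: ac_simps)
  qed
  show "mat_exp (z \<cdot>\<^sub>m A) $$ (a,b) = (\<Sum>l<n. exp (z * lam l) * cnj (v l $ b) * v l $ a)"
    unfolding mat_exp_def using assms carrier_mat sums_unique[OF sums] by simp
qed

lemma mat_exp_smult_carrier: "mat_exp (z \<cdot>\<^sub>m A) \<in> carrier_mat n n"
  using carrier_mat by (simp add: mat_exp_def)

lemma mat_exp_smult_mult_vec:
  assumes x: "x \<in> carrier_vec n"
  shows "mat_exp (z \<cdot>\<^sub>m A) *\<^sub>v x = lin_comb n {..<n} (\<lambda>l. exp (z * lam l) * braket (v l) x) v"
proof (rule eq_vecI)
  fix a assume "a < dim_vec (lin_comb n {..<n} (\<lambda>l. exp (z * lam l) * braket (v l) x) v)"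
  then have a: "a < n" by simp
  have "(mat_exp (z \<cdot>\<^sub>m A) *\<^sub>v x) $ a = (\<Sum>b<n. \<Sum>l<n. exp (z * lam l) * cnj (v l $ b) * v l $ a * x $ b)"
    using a by (simp add: index_mult_mat_vec_sum[OF mat_exp_smult_carrier x a] mat_exp_smult_index
        sum_distrib_right del: index_mult_mat_vec)
  also have "\<dots> = (\<Sum>l<n. exp (z * lam l) * braket (v l) x * v l $ a)"
    using x by (subst sum.swap) (simp add: braket_def sum_distrib_left sum_distrib_right ac_simps)
  finally show "(mat_exp (z \<cdot>\<^sub>m A) *\<^sub>v x) $ a = lin_comb n {..<n} (\<lambda>l. exp (z * lam l) * braket (v l) x) v $ a"
    using a by simp
qed (use x mat_exp_smult_carrier[of z] in simp)

lemma mat_exp_smult_mult_vec_sums: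
  assumes x: "x \<in> carrier_vec n" and a: "a < n"
  shows "(\<lambda>k. ((1 / fact k) \<cdot>\<^sub>v (((z \<cdot>\<^sub>m A) ^\<^sub>m k) *\<^sub>v x)) $ a) sums ((mat_exp (z \<cdot>\<^sub>m A) *\<^sub>v x) $ a)"
proof -
  have M: "(z \<cdot>\<^sub>m A) ^\<^sub>m k \<in> carrier_mat n n" for k using carrier_mat by simp
  have "(\<lambda>k. \<Sum>b<n. ((z \<cdot>\<^sub>m A) ^\<^sub>m k) $$ (a,b) / fact k * x $ b) sums (\<Sum>b<n. mat_exp (z \<cdot>\<^sub>m A) $$ (a,b) * x $ b)"
    using a by (intro sums_sum sums_mult2) (simp add: mat_exp_smult_index)
  moreover have "(\<Sum>b<n. ((z \<cdot>\<^sub>m A) ^\<^sub>m k) $$ (a,b) / fact k * x $ b)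
      = ((1 / fact k) \<cdot>\<^sub>v (((z \<cdot>\<^sub>m A) ^\<^sub>m k) *\<^sub>v x)) $ a" for k
    using a carrier_vecD[OF mult_mat_vec_carrier[OF M x]]
    by (simp add: index_mult_mat_vec_sum[OF M x a] sum_divide_distrib del: index_mult_mat_vec)
  ultimately show ?thesis
    using index_mult_mat_vec_sum[OF mat_exp_smult_carrier x a] by simp
qed

end

context krylov_basis
begin

lemma span_proj_in_krylov:
  assumes "in_krylov y"
  shows "span_proj N dK kv *\<^sub>v y = y"
proof -
  have "span_proj N dK kv *\<^sub>v y = lin_comb N {..<dK} (\<lambda>i. braket (kv i) y) kv"
    by (rule span_proj_mult_vec[OF in_krylov_carrier[OF assms] kv_carrier])
  also have "\<dots> = y" by (rule in_krylov_expansion[OF assms, symmetric])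
  finally show ?thesis .
qed

lemma in_krylov_power: "in_krylov x \<Longrightarrow> in_krylov (((z \<cdot>\<^sub>m H) ^\<^sub>m k) *\<^sub>v x)"
proof (induction k arbitrary: x)
  case 0
  then show ?case using in_krylov_carrier[OF 0] H by simp
next
  case (Suc k)
  have "((z \<cdot>\<^sub>m H) ^\<^sub>m Suc k) *\<^sub>v x = ((z \<cdot>\<^sub>m H) ^\<^sub>m k) *\<^sub>v (z \<cdot>\<^sub>v (H *\<^sub>v x))"
    using H in_krylov_carrier[OF Suc.prems]
    by (simp add: assoc_mult_mat_vec[of _ N N _ N] smult_mat_mult_vec[OF H])
  then show ?case using Suc.IH in_krylov_H in_krylov_smult Suc.prems by simp
qed

text \<open>The evolved state stays in the Krylov space: the span is \<open>H\<close>-invariant, hence invariant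
  under every partial sum of the exponential series, and closed under its limit.\<close>
lemma in_krylov_mat_exp:
  assumes sd: "spectral_decomp N u H lam"
  shows "in_krylov (mat_exp (z \<cdot>\<^sub>m H) *\<^sub>v \<psi>0)"
proof -
  define \<psi>t where "\<psi>t = mat_exp (z \<cdot>\<^sub>m H) *\<^sub>v \<psi>0"
  have \<psi>t: "\<psi>t \<in> carrier_vec N"
    unfolding \<psi>t_def by (rule mult_mat_vec_carrier[OF spectral_decomp.mat_exp_smult_carrier[OF sd] \<psi>0])
  define y where "y k = (1 / fact k) \<cdot>\<^sub>v (((z \<cdot>\<^sub>m H) ^\<^sub>m k) *\<^sub>v \<psi>0)" for k
  have y: "in_krylov (y k)" for k
    unfolding y_def using in_krylov_kv[of 0] kv_0 by (intro in_krylov_smult in_krylov_power) (simp add: krylov_dim_def)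
  have "(\<lambda>k. y k $ a) sums (\<psi>t $ a)" if "a < N" for a
    unfolding y_def \<psi>t_def by (rule spectral_decomp.mat_exp_smult_mult_vec_sums[OF sd \<psi>0 that])
  then have "span_proj N dK kv *\<^sub>v \<psi>t = \<psi>t"
    by (rule mult_mat_vec_fixed_sums[OF span_proj_carrier \<psi>t in_krylov_carrier[OF y] span_proj_in_krylov[OF y]])
  then have "\<psi>t = lin_comb N {..<dK} (\<lambda>i. braket (kv i) \<psi>t) kv"
    using span_proj_mult_vec[OF \<psi>t kv_carrier] by simp
  then show ?thesis unfolding \<psi>t_def[symmetric] in_krylov_def by (rule exI[of _ "\<lambda>i. braket (kv i) \<psi>t"])
qed

lemma evolved_state_unit:
  assumes sd: "spectral_decomp N u H lam"
  shows "braket (mat_exp ((- \<i> * complex_of_real t) \<cdot>\<^sub>m H) *\<^sub>v \<psi>0) (mat_exp ((- \<i> * complex_of_real t) \<cdot>\<^sub>m H) *\<^sub>v \<psi>0) = 1"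
proof -
  interpret E: spectral_decomp N u H lam by (rule sd)
  define \<psi>t where "\<psi>t = mat_exp ((- \<i> * complex_of_real t) \<cdot>\<^sub>m H) *\<^sub>v \<psi>0"
  have \<psi>t: "\<psi>t \<in> carrier_vec N" unfolding \<psi>t_def by (rule mult_mat_vec_carrier[OF E.mat_exp_smult_carrier \<psi>0])
  have "braket (u l) \<psi>t = exp (- \<i> * complex_of_real t * complex_of_real (lam l)) * braket (u l) \<psi>0" if "l < N" for l
    unfolding \<psi>t_def E.mat_exp_smult_mult_vec[OF \<psi>0]
    by (rule braket_lin_comb_orthonormal[OF E.orthonormal E.carrier that])
  then have "Re (braket \<psi>t \<psi>t) = Re (braket \<psi>0 \<psi>0)"
    unfolding E.sum_sq_braket[OF \<psi>t, symmetric] E.sum_sq_braket[OF \<psi>0, symmetric]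
    by (intro sum.cong refl) (simp add: norm_mult)
  then show ?thesis using \<psi>0_unit braket_self_real[of \<psi>t] unfolding \<psi>t_def by simp
qed

end

theorem proposition1:
  fixes dA dB :: nat and H :: "complex mat" and psi0 :: "complex vec" and t :: real
  assumes "dA > 0" and "dB > 0"
    and "H \<in> carrier_mat (dA * dB) (dA * dB)" and "hermitian_mat H"
    and "psi0 \<in> carrier_vec (dA * dB)" and "braket psi0 psi0 = 1"
  shows
    "let dK = krylov_dim H psi0;
         k = krylov_vec H psi0;
         psi_t = mat_exp ((- \<i> * complex_of_real t) \<cdot>\<^sub>m H) *\<^sub>v psi0;
         c = (\<lambda>n. braket (k n) psi_t);
         K = (\<Sum>n<dK. real n * (cmod (c n))\<^sup>2)
     in vn_entropy (ptrace_B dA dB (proj psi_t))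
        \<le> real dK * ((\<Sum>n<dK. (cmod (c n))\<^sup>2 * vn_entropy (ptrace_B dA dB (proj (k n)))) + f_K K)"
proof -
  interpret krylov_basis H psi0 "dA * dB" by unfold_locales (use assms(3-) in auto)
  obtain u lam where sd: "spectral_decomp (dA * dB) u H lam"
    using hermitian_spectral_decomp assms(3,4) by blast
  define \<psi>t where "\<psi>t = mat_exp ((- \<i> * complex_of_real t) \<cdot>\<^sub>m H) *\<^sub>v psi0"
  define p where "p n = (cmod (braket (kv n) \<psi>t))\<^sup>2" for n
  have krylov: "in_krylov \<psi>t" unfolding \<psi>t_def by (rule in_krylov_mat_exp[OF sd])
  have unit: "braket \<psi>t \<psi>t = 1" unfolding \<psi>t_def by (rule evolved_state_unit[OF sd])
  then have p1: "(\<Sum>n<dK. p n) = 1" using sum_sq_braket_krylov[OF krylov] unfolding p_def by simp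
  have "vn_entropy (ptrace_B dA dB (proj \<psi>t))
      \<le> real dK * (- (\<Sum>n<dK. xlogx (p n)) + (\<Sum>n<dK. p n * vn_entropy (ptrace_B dA dB (proj (kv n)))))"
    unfolding p_def
    by (rule vn_entropy_reduced_superposition_le[OF \<open>dB > 0\<close> kv_carrier _ in_krylov_expansion[OF krylov] unit])
      (use orthonormalD[OF orthonormal_krylov] p1 in \<open>auto simp: p_def\<close>)
  also have "\<dots> \<le> real dK * ((\<Sum>n<dK. p n * vn_entropy (ptrace_B dA dB (proj (kv n))))
      + f_K (\<Sum>n<dK. real n * p n))"
    using entropy_le_f_K[of dK p] p1 by (intro mult_left_mono) (auto simp: p_def)
  finally show ?thesis unfolding Let_def \<psi>t_def[symmetric] p_def .
qed

end
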